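(* Let $p\ge3$ be prime. The complex $\cdots\xrightarrow{\hat d_3}\tilde{\mathcal P}_2\xrightarrow{\hat d_2}\tilde{\mathcal P}_1\xrightarrow{\hat d_1}\tilde{\mathcal P}_0\to0\to\cdots$ with $\tilde{\mathcal P}_i:=\tilde P_{\omega(i)}$ for $i\ge0$, $\tilde{\mathcal P}_i:=0$ for $i<0$, and $\hat d_i:=\hat e_{\omega(i-1),\omega(i)}:\tilde P_{\omega(i)}\to\tilde P_{\omega(i-1)}$ for $i\ge1$ ($\hat d_i=0$ for $i\le0$), is a projective resolution of the trivial $\mathbb{Z}_{(p)}\mathfrak{S}_p$-module $\mathbb{Z}_{(p)}$ with augmentation $\hat\varepsilon:\tilde{\mathcal P}_0=\tilde P_1\to\mathbb{Z}_{(p)}$; explicitly it is $\cdots\to\tilde P_2\xrightarrow{\hat e_{1,2}}\tilde P_1\xrightarrow{\hat e_{1,1}}\tilde P_1\xrightarrow{\hat e_{2,1}}\tilde P_2\to\cdots\to\tilde P_{p-2}\xrightarrow{\hat e_{p-1,p-2}}\tilde P_{p-1}\xrightarrow{\hat e_{p-1,p-1}}\tilde P_{p-1}\xrightarrow{\hat e_{p-2,p-1}}\tilde P_{p-2}\to\cdots\to\tilde P_2\xrightarrow{\hat e_{1,2}}\tilde P_1\to0$.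
   Context: Let $p\ge3$ be prime and $l:=2(p-1)$. For $i\in\mathbb{Z}$ write $i=jl+r$ with $j\in\mathbb{Z}$, $0\le r\le l-1$, and set $\omega(i):=r+1$ if $0\le r\le p-2$ and $\omega(i):=l-r$ if $p-1\le r\le l-1$. Notation $\mathbb{Z}_{(p)}$, $\Gamma$, $\Lambda$, $\tilde P_k$, $\hat e_{\ast,\ast}$, $\hat\varepsilon$ as follows. For $\lambda\vdash p$ let $n_\lambda$ be the rank of the Specht module $S^\lambda$; hooks $\lambda^k:=(p-k+1,1^{k-1})$, $n^k_{\rm b}:=\binom{p-2}{k-1}$, $n^k_{\rm c}:=\binom{p-2}{k-2}$. $\Gamma:=\prod_{\lambda\vdash p}\mathbb{Z}_{(p)}^{n_\lambda\times n_\lambda}$, with blocks $\rho^{\lambda^k}_{\rm cc}$ (upper-left $n^k_{\rm c}\times n^k_{\rm c}$), $\rho^{\lambda^k}_{\rm bc}$ (upper-right $n^k_{\rm c}\times n^k_{\rm b}$), $\rho^{\lambda^k}_{\rm bb}$ (lower-right $n^k_{\rm b}\times n^k_{\rm b}$). $\Lambda:=\{\rho\in\Gamma:\rho^{\lambda^k}_{\rm bb}\equiv\rho^{\lambda^{k+1}}_{\rm cc}\bmod p\ (k\in[1,p-1]),\ \rho^{\lambda^k}_{\rm bc}\equiv0\bmod p\ (k\in[1,p])\}$; there is a known $\mathbb{Z}_{(p)}$-algebra isomorphism $\mathbb{Z}_{(p)}\mathfrak{S}_p\cong\Lambda$ under which $\rho$ acts on the trivial module $\mathbb{Z}_{(p)}$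 by the scalar $\rho^{\lambda^1}$. $\eta_{\lambda,i,j}$ denotes the matrix unit in the $\lambda$-component. $\tilde e_k:=\eta_{\lambda^k,n^k_{\rm c}+1,n^k_{\rm c}+1}+\eta_{\lambda^{k+1},1,1}$, $\tilde P_k:=\tilde e_k\Lambda$ ($k\in[1,p-1]$). Maps given by left multiplication: $\hat e_{1,1}$ by $p\eta_{\lambda^1,1,1}$ on $\tilde P_1$; $\hat e_{p-1,p-1}$ by $p\eta_{\lambda^p,1,1}$ on $\tilde P_{p-1}$; for $k\in[1,p-2]$, $\hat e_{k+1,k}:\tilde P_k\to\tilde P_{k+1}$ by $\eta_{\lambda^{k+1},n^{k+1}_{\rm c}+1,1}$ and $\hat e_{k,k+1}:\tilde P_{k+1}\to\tilde P_k$ by $p\eta_{\lambda^{k+1},1,n^{k+1}_{\rm c}+1}$. $\hat\varepsilon:\tilde P_1\to\mathbb{Z}_{(p)}$, $\rho\mapsto\rho^{\lambda^1}$. *)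

theory Defs
  imports Complex_Main "HOL-Library.FuncSet" "HOL-Computational_Algebra.Primes"
begin

section \<open>The local ring Z_(p), realised inside the rationals\<close>

definition zp :: "nat \<Rightarrow> rat \<Rightarrow> bool" where
  "zp p q \<longleftrightarrow> coprime (snd (quotient_of q)) (int p)"

definition Zp :: "nat \<Rightarrow> rat set" where
  "Zp p = {q. zp p q}"

definition congp :: "nat \<Rightarrow> rat \<Rightarrow> rat \<Rightarrow> bool" where
  "congp p a b \<longleftrightarrow> zp p a \<and> zp p b \<and> zp p ((a - b) / of_nat p)"

definition partitions :: "nat \<Rightarrow> nat list set" where
  "partitions n = {lam. sum_list lam = n \<and> sorted_wrt (\<ge>) lam \<and> 0 \<notin> set lam}"

definition cells :: "nat list \<Rightarrow> (nat \<times> nat) set" where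
  "cells lam = {(i, j). i < length lam \<and> j < lam ! i}"

definition syt :: "nat list \<Rightarrow> ((nat \<times> nat) \<Rightarrow> nat) set" where
  "syt lam = {T \<in> cells lam \<rightarrow>\<^sub>E {1..sum_list lam}.
      bij_betw T (cells lam) {1..sum_list lam} \<and>
      (\<forall>i j i' j'. (i, j) \<in> cells lam \<longrightarrow> (i', j') \<in> cells lam \<longrightarrow>
         ((i = i' \<and> j < j') \<or> (j = j' \<and> i < i')) \<longrightarrow> T (i, j) < T (i', j'))}"

text \<open>rank n_lambda of the Specht module S^lambda = number of standard Young tableaux\<close>
definition nlam :: "nat list \<Rightarrow> nat" where
  "nlam lam = card (syt lam)"

definition hook :: "nat \<Rightarrow> nat \<Rightarrow> nat list" where
  "hook p k = (p - k + 1) # replicate (k - 1) 1"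

definition nb :: "nat \<Rightarrow> nat \<Rightarrow> nat" where
  "nb p k = (p - 2) choose (k - 1)"

definition nc :: "nat \<Rightarrow> nat \<Rightarrow> nat" where
  "nc p k = (if k < 2 then 0 else (p - 2) choose (k - 2))"

section \<open>The algebra Gamma and the order Lambda\<close>

text \<open>An element of Gamma: for every partition lam a matrix with 1-based indices,
  entries outside the n_lam x n_lam range (and components at non-partitions) being 0.\<close>
type_synonym gam = "nat list \<Rightarrow> nat \<Rightarrow> nat \<Rightarrow> rat"

definition inGamma :: "nat \<Rightarrow> gam \<Rightarrow> bool" where
  "inGamma p r \<longleftrightarrow>
     (\<forall>lam i j. r lam i j \<noteq> 0 \<longrightarrow>
        lam \<in> partitions p \<and> 1 \<le> i \<and> i \<le> nlam lam \<and> 1 \<le> j \<and> j \<le> nlam lam) \<and>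
     (\<forall>lam i j. zp p (r lam i j))"

definition gadd :: "gam \<Rightarrow> gam \<Rightarrow> gam" where
  "gadd r s = (\<lambda>lam i j. r lam i j + s lam i j)"

definition gzero :: gam where
  "gzero = (\<lambda>lam i j. 0)"

definition gmult :: "gam \<Rightarrow> gam \<Rightarrow> gam" where
  "gmult r s = (\<lambda>lam i j. \<Sum>k = 1..nlam lam. r lam i k * s lam k j)"

definition gone :: "nat \<Rightarrow> gam" where
  "gone p = (\<lambda>lam i j. if lam \<in> partitions p \<and> i = j \<and> 1 \<le> i \<and> i \<le> nlam lam then 1 else 0)"

definition gsmul :: "rat \<Rightarrow> gam \<Rightarrow> gam" where
  "gsmul c r = (\<lambda>lam i j. c * r lam i j)"

definition eta :: "nat list \<Rightarrow> nat \<Rightarrow> nat \<Rightarrow> gam" where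
  "eta mu a b = (\<lambda>lam i j. if lam = mu \<and> i = a \<and> j = b then 1 else 0)"

definition Lam :: "nat \<Rightarrow> gam set" where
  "Lam p = {r. inGamma p r \<and>
     (\<forall>k \<in> {1..p-1}. \<forall>i \<in> {1..nb p k}. \<forall>j \<in> {1..nb p k}.
        congp p (r (hook p k) (nc p k + i) (nc p k + j)) (r (hook p (k+1)) i j)) \<and>
     (\<forall>k \<in> {1..p}. \<forall>i \<in> {1..nc p k}. \<forall>j \<in> {nc p k + 1..nc p k + nb p k}.
        congp p (r (hook p k) i j) 0)}"

definition etilde :: "nat \<Rightarrow> nat \<Rightarrow> gam" where
  "etilde p k = gadd (eta (hook p k) (nc p k + 1) (nc p k + 1)) (eta (hook p (k+1)) 1 1)"

definition Ptilde :: "nat \<Rightarrow> nat \<Rightarrow> gam set" where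
  "Ptilde p k = {gmult (etilde p k) r | r. r \<in> Lam p}"

text \<open>ehat p a b : P~_b \<rightarrow> P~_a, given as the element of Gamma by which one multiplies on the left\<close>
definition ehat :: "nat \<Rightarrow> nat \<Rightarrow> nat \<Rightarrow> gam" where
  "ehat p a b =
    (if a = 1 \<and> b = 1 then gsmul (of_nat p) (eta (hook p 1) 1 1)
     else if a = p - 1 \<and> b = p - 1 then gsmul (of_nat p) (eta (hook p p) 1 1)
     else if 1 \<le> b \<and> b \<le> p - 2 \<and> a = b + 1 then eta (hook p (b+1)) (nc p (b+1) + 1) 1
     else if 1 \<le> a \<and> a \<le> p - 2 \<and> b = a + 1 then gsmul (of_nat p) (eta (hook p (a+1)) 1 (nc p (a+1) + 1))
     else gzero)"

text \<open>omega, on nonnegative indices (only i \<ge> 0 is used)\<close>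
definition omega :: "nat \<Rightarrow> nat \<Rightarrow> nat" where
  "omega p i = (let l = 2 * (p - 1); r = i mod l in if r \<le> p - 2 then r + 1 else l - r)"

definition dhat :: "nat \<Rightarrow> nat \<Rightarrow> gam" where
  "dhat p i = ehat p (omega p (i - 1)) (omega p i)"

text \<open>augmentation, and the trivial module Z_(p) (rho acts by the scalar rho^{lambda^1})\<close>
definition epshat :: "nat \<Rightarrow> gam \<Rightarrow> rat" where
  "epshat p r = r (hook p 1) 1 1"

definition trivact :: "nat \<Rightarrow> rat \<Rightarrow> gam \<Rightarrow> rat" where
  "trivact p x r = x * r (hook p 1) 1 1"

definition is_rmod :: "nat \<Rightarrow> 'm set \<Rightarrow> ('m \<Rightarrow> 'm \<Rightarrow> 'm) \<Rightarrow> 'm \<Rightarrow> ('m \<Rightarrow> gam \<Rightarrow> 'm) \<Rightarrow> bool" where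
  "is_rmod p M add z act \<longleftrightarrow>
     z \<in> M \<and>
     (\<forall>x\<in>M. \<forall>y\<in>M. add x y \<in> M) \<and>
     (\<forall>x\<in>M. \<forall>y\<in>M. \<forall>w\<in>M. add (add x y) w = add x (add y w)) \<and>
     (\<forall>x\<in>M. \<forall>y\<in>M. add x y = add y x) \<and>
     (\<forall>x\<in>M. add z x = x) \<and>
     (\<forall>x\<in>M. \<exists>y\<in>M. add x y = z) \<and>
     (\<forall>x\<in>M. \<forall>r\<in>Lam p. act x r \<in> M) \<and>
     (\<forall>x\<in>M. \<forall>r\<in>Lam p. \<forall>s\<in>Lam p. act x (gadd r s) = add (act x r) (act x s)) \<and>
     (\<forall>x\<in>M. \<forall>y\<in>M. \<forall>r\<in>Lam p. act (add x y) r = add (act x r) (act y r)) \<and>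
     (\<forall>x\<in>M. \<forall>r\<in>Lam p. \<forall>s\<in>Lam p. act x (gmult r s) = act (act x r) s) \<and>
     (\<forall>x\<in>M. act x (gone p) = x)"

definition is_rhom :: "nat \<Rightarrow> 'm set \<Rightarrow> ('m \<Rightarrow> 'm \<Rightarrow> 'm) \<Rightarrow> ('m \<Rightarrow> gam \<Rightarrow> 'm) \<Rightarrow>
    'n set \<Rightarrow> ('n \<Rightarrow> 'n \<Rightarrow> 'n) \<Rightarrow> ('n \<Rightarrow> gam \<Rightarrow> 'n) \<Rightarrow> ('m \<Rightarrow> 'n) \<Rightarrow> bool" where
  "is_rhom p M addM actM N addN actN f \<longleftrightarrow>
     (\<forall>x\<in>M. f x \<in> N) \<and>
     (\<forall>x\<in>M. \<forall>y\<in>M. f (addM x y) = addN (f x) (f y)) \<and>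
     (\<forall>x\<in>M. \<forall>r\<in>Lam p. f (actM x r) = actN (f x) r)"

text \<open>Projectivity: lifting property against every surjective homomorphism of right
  Lambda-modules whose carriers live in the type 'm (the type is a parameter, and the
  theorem is stated for an arbitrary type 'm).\<close>
definition projective_rmod :: "'m itself \<Rightarrow> nat \<Rightarrow> 'a set \<Rightarrow> ('a \<Rightarrow> 'a \<Rightarrow> 'a) \<Rightarrow> 'a \<Rightarrow>
    ('a \<Rightarrow> gam \<Rightarrow> 'a) \<Rightarrow> bool" where
  "projective_rmod T p P addP zP actP \<longleftrightarrow>
     is_rmod p P addP zP actP \<and>
     (\<forall>(A :: 'm set) addA zA actA (B :: 'm set) addB zB actB g f.
        is_rmod p A addA zA actA \<longrightarrow> is_rmod p B addB zB actB \<longrightarrow>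
        is_rhom p A addA actA B addB actB g \<longrightarrow> g ` A = B \<longrightarrow>
        is_rhom p P addP actP B addB actB f \<longrightarrow>
        (\<exists>h. is_rhom p P addP actP A addA actA h \<and> (\<forall>x\<in>P. g (h x) = f x)))"

end

theory Submission
  imports Defs
begin

text \<open>The module \<open>Ptilde p c\<close> consists of the elements of \<open>Lam p\<close> supported on two rows,
  one in the \<open>hook p c\<close> component and one in the \<open>hook p (c + 1)\<close> component, tied together by
  congruences mod \<open>p\<close>. Every differential either moves the second row of \<open>Ptilde p c\<close> into the first
  row of \<open>Ptilde p (c + 1)\<close>, or multiplies the first row of \<open>Ptilde p (c + 1)\<close> by \<open>p\<close> and moves it
  into the second row of \<open>Ptilde p c\<close>; at the two turning points of \<open>omega\<close> one row is multiplied
  by \<open>p\<close> in place. So kernel and image are both "one row vanishes"; the image is all of it since, where a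
  differential multiplies by \<open>p\<close>, the congruences force the surviving row to be divisible by \<open>p\<close>.
  Projectivity holds because \<open>etilde p c\<close> is a left identity on \<open>Ptilde p c\<close>.\<close>

section \<open>Arithmetic in \<open>Zp p\<close>\<close>

lemma zp_iff_fraction:
  "zp p q \<longleftrightarrow> (\<exists>a b. b > 0 \<and> coprime b (int p) \<and> q = of_int a / of_int b)"
proof
  assume "zp p q"
  obtain a b where ab: "quotient_of q = (a, b)" by (cases "quotient_of q") auto
  show "\<exists>a b. b > 0 \<and> coprime b (int p) \<and> q = of_int a / of_int b"
    using \<open>zp p q\<close> ab quotient_of_denom_pos[OF ab] quotient_of_div[OF ab] unfolding zp_def by auto
next
  assume "\<exists>a b. b > 0 \<and> coprime b (int p) \<and> q = of_int a / of_int b"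
  then obtain a b where b: "b > 0" "coprime b (int p)" and q: "q = of_int a / of_int b" by auto
  obtain a' b' where ab: "quotient_of q = (a', b')" by (cases "quotient_of q") auto
  have "of_int a' / of_int b' = (of_int a / of_int b :: rat)"
    using quotient_of_div[OF ab] q by simp
  hence "a' * b = a * b'"
    using b quotient_of_denom_pos[OF ab] by (simp add: field_simps flip: of_int_mult of_int_eq_iff)
  hence "b' dvd b"
    using quotient_of_coprime[OF ab] by (metis coprime_commute coprime_dvd_mult_right_iff dvd_triv_right)
  hence "coprime b' (int p)" using b(2) coprime_imp_coprime by (meson coprime_def dvd_trans)
  thus "zp p q" unfolding zp_def using ab by simp
qed

lemma zp_add: "zp p x \<Longrightarrow> zp p y \<Longrightarrow> zp p (x + y)"
  unfolding zp_iff_fraction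
  by (elim exE conjE, rename_tac a b c d, rule_tac x = "a * d + c * b" in exI, rule_tac x = "b * d" in exI)
     (auto simp: field_simps)

lemma zp_mult: "zp p x \<Longrightarrow> zp p y \<Longrightarrow> zp p (x * y)"
  unfolding zp_iff_fraction
  by (elim exE conjE, rename_tac a b c d, rule_tac x = "a * c" in exI, rule_tac x = "b * d" in exI)
     (auto simp: field_simps)

lemma zp_of_int [simp]: "zp p (of_int a)"
  unfolding zp_iff_fraction by (intro exI[of _ a] exI[of _ 1]) auto

lemma zp_of_nat [simp]: "zp p (of_nat n)"
  using zp_of_int[of p "int n"] by simp

lemma zp_0 [simp]: "zp p 0" and zp_1 [simp]: "zp p 1"
  using zp_of_int[of p 0] zp_of_int[of p 1] by simp_all

lemma zp_uminus: "zp p x \<Longrightarrow> zp p (- x)"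
  using zp_mult[of p "-1" x] zp_of_int[of p "-1"] by simp

lemma zp_sum: "(\<And>i. i \<in> S \<Longrightarrow> zp p (f i)) \<Longrightarrow> zp p (sum f S)"
  by (induction S rule: infinite_finite_induct) (auto intro: zp_add)

lemma congp_refl: "zp p a \<Longrightarrow> congp p a a"
  unfolding congp_def by simp

lemma congp_sym: "congp p a b \<Longrightarrow> congp p b a"
  unfolding congp_def using zp_uminus[of p "(a - b) / of_nat p"] by (simp add: minus_divide_left)

lemma congp_trans [trans]: "congp p a b \<Longrightarrow> congp p b c \<Longrightarrow> congp p a c"
  unfolding congp_def using zp_add[of p "(a - b) / of_nat p" "(b - c) / of_nat p"]
  by (simp add: diff_divide_distrib)

lemma congp_add: "congp p a b \<Longrightarrow> congp p a' b' \<Longrightarrow> congp p (a + a') (b + b')"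
  unfolding congp_def using zp_add[of p "(a - b) / of_nat p" "(a' - b') / of_nat p"]
  by (simp add: zp_add diff_divide_distrib add_divide_distrib algebra_simps)

lemma congp_uminus: "congp p a b \<Longrightarrow> congp p (- a) (- b)"
  unfolding congp_def using zp_uminus[of p "(a - b) / of_nat p"]
  by (simp add: zp_uminus minus_divide_left)

lemma congp_mult: "congp p a b \<Longrightarrow> congp p a' b' \<Longrightarrow> congp p (a * a') (b * b')"
proof -
  assume ab: "congp p a b" and ab': "congp p a' b'"
  have "(a * a' - b * b') / of_nat p = (a - b) / of_nat p * a' + b * ((a' - b') / of_nat p)"
    by (cases "p = 0") (simp_all add: field_simps)
  hence "zp p ((a * a' - b * b') / of_nat p)"
    using ab ab' unfolding congp_def by (metis zp_add zp_mult)
  thus ?thesis using ab ab' unfolding congp_def by (simp add: zp_mult)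
qed

lemma congp_sum:
  "(\<And>i. i \<in> S \<Longrightarrow> congp p (f i) (g i)) \<Longrightarrow> congp p (sum f S) (sum g S)"
  by (induction S rule: infinite_finite_induct) (auto intro: congp_add simp: congp_refl)

lemma congp_sum_zero: "(\<And>i. i \<in> S \<Longrightarrow> congp p (f i) 0) \<Longrightarrow> congp p (sum f S) 0"
  using congp_sum[of S p f "\<lambda>_. 0"] by simp

lemma congp_zero_mult: "congp p a 0 \<Longrightarrow> zp p b \<Longrightarrow> congp p (a * b) 0"
  using congp_mult[of p a 0 b b] congp_refl[of p b] by simp

lemma congp_mult_zero: "zp p a \<Longrightarrow> congp p b 0 \<Longrightarrow> congp p (a * b) 0"
  using congp_mult[of p a a b 0] congp_refl[of p a] by simp

lemma congp_times_p: "0 < p \<Longrightarrow> zp p a \<Longrightarrow> congp p (of_nat p * a) 0"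
  unfolding congp_def by (simp add: zp_mult)

lemma congp_zero_divide_p: "congp p a 0 \<Longrightarrow> zp p (a / of_nat p)"
  unfolding congp_def by simp

section \<open>Standard tableaux of hook shape\<close>

lemma strict_mono_on_nth_sorted_list_of_set:
  "strict_mono_on {..<card A} ((!) (sorted_list_of_set A))"
  using sorted_wrt_nth_less[OF sorted_list_of_set.strict_sorted_key_list_of_set[of A]]
  by (cases "finite A") (auto simp: strict_mono_on_def)

lemma bij_betw_nth_sorted_list_of_set:
  "finite A \<Longrightarrow> bij_betw ((!) (sorted_list_of_set A)) {..<card A} A"
  by (rule bij_betw_nth) simp_all

lemma sorted_list_of_set_image_strict_mono:
  fixes f :: "nat \<Rightarrow> 'a::linorder"
  assumes "strict_mono_on {..<n} f"
  shows "sorted_list_of_set (f ` {..<n}) = map f [0..<n]"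
proof -
  have "sorted_wrt (<) (map f [0..<n])"
    using assms by (auto simp: sorted_wrt_iff_nth_less strict_mono_on_def)
  moreover have "card (f ` {..<n}) = n"
    using card_image[OF strict_mono_on_imp_inj_on[OF assms]] by simp
  ultimately show ?thesis
    by (subst sorted_list_of_set_unique[symmetric]) (auto simp: atLeast0LessThan)
qed

lemma cells_hook_shape:
  "(i, j) \<in> cells (a # replicate m 1) \<longleftrightarrow> (i = 0 \<and> j < a) \<or> (1 \<le> i \<and> i \<le> m \<and> j = 0)"
  unfolding cells_def by (cases i) auto

lemmas cells_hook_shape' = cells_hook_shape[unfolded One_nat_def]
declare cells_hook_shape [simp] cells_hook_shape' [simp]

lemma cells_hook_shape_eq:
  "cells (a # replicate m 1) = (\<lambda>j. (0, j)) ` {..<a} \<union> (\<lambda>k. (Suc k, 0)) ` {..<m}"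
proof (rule set_eqI, clarify)
  fix i j :: nat
  show "(i, j) \<in> cells (a # replicate m 1) \<longleftrightarrow>
        (i, j) \<in> (\<lambda>j. (0, j)) ` {..<a} \<union> (\<lambda>k. (Suc k, 0)) ` {..<m}"
    by (cases i) auto
qed

lemma syt_hook_iff:
  assumes "1 \<le> a"
  shows "T \<in> syt (a # replicate m 1) \<longleftrightarrow>
    T \<in> cells (a # replicate m 1) \<rightarrow>\<^sub>E {1..a + m} \<and> bij_betw T (cells (a # replicate m 1)) {1..a + m} \<and>
    strict_mono_on {..<a} (\<lambda>j. T (0, j)) \<and> strict_mono_on {..m} (\<lambda>i. T (i, 0))"
proof -
  let ?M = "\<forall>i j i' j'. (i, j) \<in> cells (a # replicate m 1) \<longrightarrow> (i', j') \<in> cells (a # replicate m 1) \<longrightarrow>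
              (i = i' \<and> j < j' \<or> j = j' \<and> i < i') \<longrightarrow> T (i, j) < T (i', j')"
  have "?M \<longleftrightarrow> strict_mono_on {..<a} (\<lambda>j. T (0, j)) \<and> strict_mono_on {..m} (\<lambda>i. T (i, 0))"
  proof
    assume M: ?M
    have "T (r, 0) < T (s, 0)" if "r < s" "s \<le> m" for r s
      using M[rule_format, of r 0 s 0] assms that by (cases r) simp_all
    thus "strict_mono_on {..<a} (\<lambda>j. T (0, j)) \<and> strict_mono_on {..m} (\<lambda>i. T (i, 0))"
      using M[rule_format, of 0 _ 0] unfolding strict_mono_on_def by simp
  qed (auto simp: strict_mono_on_def)
  moreover have "sum_list (a # replicate m 1) = a + m" by (simp add: sum_list_replicate)
  ultimately show ?thesis unfolding syt_def by simp
qed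

text \<open>A standard tableau of hook shape is determined by the set of entries in its leg, which can
  be any \<open>m\<close>-subset of \<open>{2..a+m}\<close>; the arm carries the complement in increasing order.\<close>

definition leg_entries :: "nat \<Rightarrow> (nat \<times> nat \<Rightarrow> nat) \<Rightarrow> nat set" where
  "leg_entries m T = (\<lambda>k. T (Suc k, 0)) ` {..<m}"

definition hook_tableau :: "nat \<Rightarrow> nat \<Rightarrow> nat set \<Rightarrow> nat \<times> nat \<Rightarrow> nat" where
  "hook_tableau a m S = (\<lambda>(i, j).
     if (i, j) \<in> cells (a # replicate m 1) then
       (if i = 0 then sorted_list_of_set ({1..a + m} - S) ! j else sorted_list_of_set S ! (i - 1))
     else undefined)"

lemma leg_entries_subset:
  assumes "1 \<le> a" "T \<in> syt (a # replicate m 1)"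
  shows "leg_entries m T \<subseteq> {2..a + m}" "card (leg_entries m T) = m"
proof -
  note T = assms(2)[unfolded syt_hook_iff[OF assms(1)]]
  have "T (Suc k, 0) \<in> {1..a + m}" "T (0, 0) < T (Suc k, 0)" "T (0, 0) \<in> {1..a + m}" if "k < m" for k
    using T that assms(1) by (auto simp: strict_mono_on_def cells_hook_shape dest!: PiE_mem)
  thus "leg_entries m T \<subseteq> {2..a + m}" unfolding leg_entries_def by fastforce
  have "strict_mono_on {..<m} (\<lambda>k. T (Suc k, 0))"
    using T by (auto simp: strict_mono_on_def)
  thus "card (leg_entries m T) = m"
    unfolding leg_entries_def by (simp add: card_image strict_mono_on_imp_inj_on)
qed

lemma hook_tableau_arm: "j < a \<Longrightarrow> hook_tableau a m S (0, j) = sorted_list_of_set ({1..a + m} - S) ! j"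
  unfolding hook_tableau_def by simp

lemma hook_tableau_leg: "k < m \<Longrightarrow> hook_tableau a m S (Suc k, 0) = sorted_list_of_set S ! k"
  unfolding hook_tableau_def by simp

lemma bij_betw_hook_tableau:
  assumes S: "S \<subseteq> {2..a + m}" "card S = m"
  shows "bij_betw (hook_tableau a m S) ((\<lambda>j. (0, j)) ` {..<a}) ({1..a + m} - S)"
    and "bij_betw (hook_tableau a m S) ((\<lambda>k. (Suc k, 0)) ` {..<m}) S"
proof -
  define R where "R = {1..a + m} - S"
  have fin: "finite S" "finite R" unfolding R_def using finite_subset[OF S(1)] by simp_all
  have "card R = a" unfolding R_def using S fin(1) by (subst card_Diff_subset) auto
  hence "bij_betw ((!) (sorted_list_of_set R)) {..<a} R"
    using bij_betw_nth_sorted_list_of_set[OF fin(2)] by simp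
  moreover have "hook_tableau a m S (0, j) = sorted_list_of_set R ! j" if "j \<in> {..<a}" for j
    using hook_tableau_arm[of j a m S] that unfolding R_def by simp
  ultimately have "bij_betw (\<lambda>j. hook_tableau a m S (0, j)) {..<a} R"
    by (subst bij_betw_cong) auto
  thus "bij_betw (hook_tableau a m S) ((\<lambda>j. (0, j)) ` {..<a}) ({1..a + m} - S)"
    unfolding R_def by (subst bij_betw_comp_iff[OF inj_on_imp_bij_betw]) (auto simp: inj_on_def comp_def)
  have "bij_betw ((!) (sorted_list_of_set S)) {..<m} S"
    using bij_betw_nth_sorted_list_of_set[OF fin(1)] S(2) by simp
  moreover have "hook_tableau a m S (Suc k, 0) = sorted_list_of_set S ! k" if "k \<in> {..<m}" for k
    using hook_tableau_leg[of k m a S] that by simp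
  ultimately have "bij_betw (\<lambda>k. hook_tableau a m S (Suc k, 0)) {..<m} S"
    by (subst bij_betw_cong) auto
  thus "bij_betw (hook_tableau a m S) ((\<lambda>k. (Suc k, 0)) ` {..<m}) S"
    by (subst bij_betw_comp_iff[OF inj_on_imp_bij_betw]) (auto simp: inj_on_def comp_def)
qed

lemma strict_mono_hook_tableau:
  assumes a: "1 \<le> a" and S: "S \<subseteq> {2..a + m}" "card S = m"
  shows "strict_mono_on {..<a} (\<lambda>j. hook_tableau a m S (0, j))"
    and "strict_mono_on {..m} (\<lambda>i. hook_tableau a m S (i, 0))"
proof -
  define R where "R = {1..a + m} - S"
  let ?T = "hook_tableau a m S"
  have fin: "finite R" unfolding R_def by simp
  have "card R = a" unfolding R_def using S finite_subset[OF S(1)] by (subst card_Diff_subset) auto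
  thus "strict_mono_on {..<a} (\<lambda>j. ?T (0, j))"
    using strict_mono_on_nth_sorted_list_of_set[of R] hook_tableau_arm[of _ a m S]
    unfolding R_def by (simp add: strict_mono_on_def)
  have "1 \<in> R" "\<forall>x\<in>R. 1 \<le> x" using S(1) a unfolding R_def by auto
  hence "Min R = 1" using fin by (intro Min_eqI) auto
  hence "sorted_list_of_set R = 1 # sorted_list_of_set (R - {1})"
    using sorted_list_of_set_nonempty[of R] fin \<open>1 \<in> R\<close> by auto
  hence corner: "?T (0, 0) = 1" using hook_tableau_arm[of 0 a m S] a unfolding R_def by simp
  have leg_S: "?T (Suc k, 0) \<in> S" if "k < m" for k
    using bij_betw_hook_tableau(2)[OF S] that by (auto dest: bij_betw_apply)
  have leg_lt: "?T (Suc k, 0) < ?T (Suc k', 0)" if "k < k'" "k' < m" for k k'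
    using strict_mono_on_nth_sorted_list_of_set[of S] hook_tableau_leg[of _ m a S] that S(2)
    by (simp add: strict_mono_on_def)
  have "?T (r, 0) < ?T (s, 0)" if rs: "r < s" "s \<le> m" for r s
  proof -
    obtain k' where s: "s = Suc k'" using rs by (cases s) auto
    show ?thesis
    proof (cases r)
      case 0
      thus ?thesis using corner leg_S[of k'] S(1) s rs by fastforce
    next
      case (Suc k)
      thus ?thesis using leg_lt[of k k'] s rs by simp
    qed
  qed
  thus "strict_mono_on {..m} (\<lambda>i. ?T (i, 0))" by (simp add: strict_mono_on_def)
qed

lemma hook_tableau_in_syt:
  assumes a: "1 \<le> a" and S: "S \<subseteq> {2..a + m}" "card S = m"
  shows "hook_tableau a m S \<in> syt (a # replicate m 1)" "leg_entries m (hook_tableau a m S) = S"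
proof -
  let ?T = "hook_tableau a m S"
  have "({1..a + m} - S) \<union> S = {1..a + m}" using S(1) by auto
  hence bij: "bij_betw ?T (cells (a # replicate m 1)) {1..a + m}"
    unfolding cells_hook_shape_eq using bij_betw_combine[OF bij_betw_hook_tableau[OF S]] by auto
  have "?T \<in> extensional (cells (a # replicate m 1))"
    unfolding hook_tableau_def extensional_def by auto
  hence "?T \<in> cells (a # replicate m 1) \<rightarrow>\<^sub>E {1..a + m}"
    using bij_betw_imp_surj_on[OF bij] by (auto simp: PiE_iff)
  thus "?T \<in> syt (a # replicate m 1)"
    unfolding syt_hook_iff[OF a] using bij strict_mono_hook_tableau[OF a S] by blast
  show "leg_entries m ?T = S"
    unfolding leg_entries_def using bij_betw_imp_surj_on[OF bij_betw_hook_tableau(2)[OF S]]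
    by (simp add: image_image)
qed

lemma hook_tableau_leg_entries:
  assumes a: "1 \<le> a" and T: "T \<in> syt (a # replicate m 1)"
  shows "hook_tableau a m (leg_entries m T) = T"
proof -
  let ?arm = "(\<lambda>j. (0, j)) ` {..<a}" and ?leg = "(\<lambda>k. (Suc k, 0)) ` {..<m}"
  note T' = T[unfolded syt_hook_iff[OF a]]
  have "cells (a # replicate m 1) - ?leg = ?arm" unfolding cells_hook_shape_eq by auto
  hence "{1..a + m} - leg_entries m T = (\<lambda>j. T (0, j)) ` {..<a}"
    using bij_betw_imp_surj_on[OF T'[THEN conjunct2, THEN conjunct1]]
      inj_on_image_set_diff[OF bij_betw_imp_inj_on[OF T'[THEN conjunct2, THEN conjunct1]],
        of "cells (a # replicate m 1)" ?leg]
    unfolding leg_entries_def cells_hook_shape_eq by (auto simp: image_image)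
  hence arm: "sorted_list_of_set ({1..a + m} - leg_entries m T) = map (\<lambda>j. T (0, j)) [0..<a]"
    using T' by (simp add: sorted_list_of_set_image_strict_mono)
  have "strict_mono_on {..<m} (\<lambda>k. T (Suc k, 0))"
    using T' by (auto simp: strict_mono_on_def)
  hence leg: "sorted_list_of_set (leg_entries m T) = map (\<lambda>k. T (Suc k, 0)) [0..<m]"
    unfolding leg_entries_def by (rule sorted_list_of_set_image_strict_mono)
  show ?thesis
  proof
    fix x :: "nat \<times> nat"
    show "hook_tableau a m (leg_entries m T) x = T x"
    proof (cases "x \<in> cells (a # replicate m 1)")
      case True
      thus ?thesis unfolding hook_tableau_def arm leg
        by (cases x) (auto simp: cells_hook_shape gr0_conv_Suc)
    next
      case False
      hence "hook_tableau a m (leg_entries m T) x = undefined"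
        by (cases x) (auto simp: hook_tableau_def)
      thus ?thesis using PiE_arb[OF T'[THEN conjunct1] False] by simp
    qed
  qed
qed

lemma card_syt_hook:
  assumes "1 \<le> a"
  shows "card (syt (a # replicate m 1)) = (a + m - 1) choose m"
proof -
  have "bij_betw (leg_entries m) (syt (a # replicate m 1)) {S. S \<subseteq> {2..a + m} \<and> card S = m}"
  proof (rule bij_betw_byWitness[where f' = "hook_tableau a m"])
    show "\<forall>T\<in>syt (a # replicate m 1). hook_tableau a m (leg_entries m T) = T"
      using hook_tableau_leg_entries[OF assms] by blast
    show "\<forall>S\<in>{S. S \<subseteq> {2..a + m} \<and> card S = m}. leg_entries m (hook_tableau a m S) = S"
      using hook_tableau_in_syt(2)[OF assms] by blast
    show "leg_entries m ` syt (a # replicate m 1) \<subseteq> {S. S \<subseteq> {2..a + m} \<and> card S = m}"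
      using leg_entries_subset[OF assms] by blast
    show "hook_tableau a m ` {S. S \<subseteq> {2..a + m} \<and> card S = m} \<subseteq> syt (a # replicate m 1)"
      using hook_tableau_in_syt(1)[OF assms] by blast
  qed
  hence "card (syt (a # replicate m 1)) = card {S. S \<subseteq> {2..a + m} \<and> card S = m}"
    by (rule bij_betw_same_card)
  also have "\<dots> = (a + m - 1) choose m" by (subst n_subsets) simp_all
  finally show ?thesis .
qed

lemma length_hook: "1 \<le> k \<Longrightarrow> length (hook p k) = k"
  unfolding hook_def by simp

lemma hook_eq_iff: "1 \<le> a \<Longrightarrow> 1 \<le> b \<Longrightarrow> hook p a = hook p b \<longleftrightarrow> a = b"
  using length_hook[of a p] length_hook[of b p] by metis

lemma hook_in_partitions: "1 \<le> k \<Longrightarrow> k \<le> p \<Longrightarrow> hook p k \<in> partitions p"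
proof -
  assume k: "1 \<le> k" "k \<le> p"
  have "sorted_wrt (\<ge>) (replicate n (1::nat))" for n by (induction n) auto
  thus ?thesis using k unfolding partitions_def hook_def by (auto simp: sum_list_replicate)
qed

lemma nlam_hook: "1 \<le> k \<Longrightarrow> k \<le> p \<Longrightarrow> nlam (hook p k) = (p - 1) choose (k - 1)"
  unfolding nlam_def hook_def by (subst card_syt_hook) simp_all

lemma nlam_hook_eq: "1 \<le> k \<Longrightarrow> k \<le> p \<Longrightarrow> nlam (hook p k) = nc p k + nb p k"
proof -
  assume k: "1 \<le> k" "k \<le> p"
  show ?thesis
  proof (cases "k = 1")
    case False
    hence "p - 1 = Suc (p - 2)" "k - 1 = Suc (k - 2)" using k by auto
    thus ?thesis using nlam_hook[OF k] False unfolding nc_def nb_def by simp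
  qed (use nlam_hook[OF k] in \<open>simp add: nc_def nb_def\<close>)
qed

lemma nc_Suc: "1 \<le> k \<Longrightarrow> nc p (Suc k) = nb p k"
  unfolding nc_def nb_def by auto

lemma nb_pos: "1 \<le> k \<Longrightarrow> k < p \<Longrightarrow> 1 \<le> nb p k"
  unfolding nb_def by (simp add: Suc_le_eq)

section \<open>The projective modules \<open>Ptilde p c\<close>\<close>

lemma gadd_assoc: "gadd (gadd x y) z = gadd x (gadd y z)"
  unfolding gadd_def by (simp add: add.assoc)

lemma gadd_commute: "gadd x y = gadd y x"
  unfolding gadd_def by (simp add: add.commute)

lemma gadd_gzero_left: "gadd gzero x = x"
  unfolding gadd_def gzero_def by simp

lemma gmult_assoc: "gmult (gmult r s) t = gmult r (gmult s t)"
  unfolding gmult_def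
  by (intro ext) (simp add: sum_distrib_left sum_distrib_right mult.assoc, rule sum.swap)

lemma gmult_gadd_left: "gmult (gadd r s) t = gadd (gmult r t) (gmult s t)"
  unfolding gmult_def gadd_def by (intro ext) (simp add: distrib_right sum.distrib)

lemma gmult_gadd_right: "gmult r (gadd s t) = gadd (gmult r s) (gmult r t)"
  unfolding gmult_def gadd_def by (intro ext) (simp add: distrib_left sum.distrib)

lemma gmult_gsmul_left: "gmult (gsmul c r) s = gsmul c (gmult r s)"
  unfolding gmult_def gsmul_def by (intro ext) (simp add: sum_distrib_left mult.assoc)

lemma gmult_eta_left:
  "gmult (eta mu a b) x = (\<lambda>lam i j. if lam = mu \<and> i = a \<and> 1 \<le> b \<and> b \<le> nlam mu then x mu b j else 0)"
proof (intro ext)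
  fix lam i j
  have "gmult (eta mu a b) x lam i j =
        (\<Sum>k = 1..nlam lam. if lam = mu \<and> i = a then (if k = b then x lam k j else 0) else 0)"
    unfolding gmult_def eta_def by (intro sum.cong) auto
  thus "gmult (eta mu a b) x lam i j = (if lam = mu \<and> i = a \<and> 1 \<le> b \<and> b \<le> nlam mu then x mu b j else 0)"
    by (cases "lam = mu \<and> i = a") (auto simp: sum.delta')
qed

lemma gmult_gone_right:
  assumes "\<And>lam i j. x lam i j \<noteq> 0 \<Longrightarrow> lam \<in> partitions p \<and> 1 \<le> j \<and> j \<le> nlam lam"
  shows "gmult x (gone p) = x"
proof (intro ext)
  fix lam i j
  have "gmult x (gone p) lam i j =
        (\<Sum>k = 1..nlam lam. if k = j then (if lam \<in> partitions p then x lam i k else 0) else 0)"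
    unfolding gmult_def gone_def by (intro sum.cong) auto
  thus "gmult x (gone p) lam i j = x lam i j"
    using assms[of lam i j] by (auto simp: sum.delta')
qed

lemma hook_dims:
  assumes "1 \<le> c" "c < p"
  shows "nlam (hook p c) = nc p c + nb p c" "nlam (hook p (c + 1)) = nb p c + nb p (c + 1)"
    "nc p (c + 1) = nb p c" "1 \<le> nb p c"
  using assms nlam_hook_eq[of c p] nlam_hook_eq[of "c + 1" p] nc_Suc[of c p] nb_pos[of c p] by simp_all

text \<open>\<open>Ptilde p c = etilde p c \<cdot> Lam p\<close> consists of the elements of \<open>Lam p\<close> vanishing outside
  row \<open>nc p c + 1\<close> of the \<open>hook p c\<close> component and row \<open>1\<close> of the \<open>hook p (c + 1)\<close> component;
  on these two rows \<open>A\<close> and \<open>B\<close> the congruences defining \<open>Lam p\<close> become \<open>admissible_rows\<close>.\<close>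

definition row_pair :: "nat \<Rightarrow> nat \<Rightarrow> (nat \<Rightarrow> rat) \<Rightarrow> (nat \<Rightarrow> rat) \<Rightarrow> gam" where
  "row_pair p c A B = (\<lambda>lam i j.
     if lam = hook p c \<and> i = nc p c + 1 \<and> 1 \<le> j \<and> j \<le> nlam (hook p c) then A j
     else if lam = hook p (c + 1) \<and> i = 1 \<and> 1 \<le> j \<and> j \<le> nlam (hook p (c + 1)) then B j
     else 0)"

definition admissible_rows :: "nat \<Rightarrow> nat \<Rightarrow> (nat \<Rightarrow> rat) \<Rightarrow> (nat \<Rightarrow> rat) \<Rightarrow> bool" where
  "admissible_rows p c A B \<longleftrightarrow>
     (\<forall>j \<in> {1..nlam (hook p c)}. zp p (A j)) \<and> (\<forall>j \<in> {1..nlam (hook p (c + 1))}. zp p (B j)) \<and>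
     (\<forall>j \<in> {1..nb p c}. congp p (A (nc p c + j)) (B j)) \<and>
     (\<forall>j \<in> {1..nb p (c + 1)}. congp p (B (nc p (c + 1) + j)) 0)"

lemma admissible_rowsD:
  assumes "admissible_rows p c A B"
  shows "j \<in> {1..nlam (hook p c)} \<Longrightarrow> zp p (A j)"
    and "j \<in> {1..nlam (hook p (c + 1))} \<Longrightarrow> zp p (B j)"
    and "j \<in> {1..nb p c} \<Longrightarrow> congp p (A (nc p c + j)) (B j)"
    and "j \<in> {1..nb p (c + 1)} \<Longrightarrow> congp p (B (nc p (c + 1) + j)) 0"
  using assms unfolding admissible_rows_def by blast+

lemma row_pair_hook:
  assumes "1 \<le> k" "1 \<le> c"
  shows "row_pair p c A B (hook p k) i j =
    (if k = c \<and> i = nc p c + 1 \<and> 1 \<le> j \<and> j \<le> nlam (hook p c) then A j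
     else if k = c + 1 \<and> i = 1 \<and> 1 \<le> j \<and> j \<le> nlam (hook p (c + 1)) then B j else 0)"
  unfolding row_pair_def using hook_eq_iff[of k c p] hook_eq_iff[of k "c + 1" p] assms by auto

lemma row_pair_nonzero:
  "row_pair p c A B lam i j \<noteq> 0 \<Longrightarrow>
     lam = hook p c \<and> i = nc p c + 1 \<and> 1 \<le> j \<and> j \<le> nlam (hook p c) \<or>
     lam = hook p (c + 1) \<and> i = 1 \<and> 1 \<le> j \<and> j \<le> nlam (hook p (c + 1))"
  unfolding row_pair_def by (simp split: if_splits)

lemma row_pair_cong:
  "(\<And>j. 1 \<le> j \<Longrightarrow> j \<le> nlam (hook p c) \<Longrightarrow> A j = A' j) \<Longrightarrow>
   (\<And>j. 1 \<le> j \<Longrightarrow> j \<le> nlam (hook p (c + 1)) \<Longrightarrow> B j = B' j) \<Longrightarrow>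
   row_pair p c A B = row_pair p c A' B'"
  unfolding row_pair_def by (intro ext) auto

lemma row_pair_zero: "row_pair p c (\<lambda>_. 0) (\<lambda>_. 0) = gzero"
  unfolding row_pair_def gzero_def by (intro ext) simp

lemma row_pair_eq_gzero_iff:
  assumes "1 \<le> c"
  shows "row_pair p c A B = gzero \<longleftrightarrow>
    (\<forall>j \<in> {1..nlam (hook p c)}. A j = 0) \<and> (\<forall>j \<in> {1..nlam (hook p (c + 1))}. B j = 0)"
proof
  assume "row_pair p c A B = gzero"
  hence z: "row_pair p c A B (hook p k) i j = 0" for k i j by (simp add: gzero_def)
  show "(\<forall>j \<in> {1..nlam (hook p c)}. A j = 0) \<and> (\<forall>j \<in> {1..nlam (hook p (c + 1))}. B j = 0)"
  proof (intro conjI ballI)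
    fix j assume "j \<in> {1..nlam (hook p c)}"
    thus "A j = 0" using z[of c "nc p c + 1" j] assms by (simp add: row_pair_hook)
  next
    fix j assume "j \<in> {1..nlam (hook p (c + 1))}"
    thus "B j = 0" using z[of "c + 1" 1 j] assms by (simp add: row_pair_hook)
  qed
next
  assume "(\<forall>j \<in> {1..nlam (hook p c)}. A j = 0) \<and> (\<forall>j \<in> {1..nlam (hook p (c + 1))}. B j = 0)"
  hence "row_pair p c A B = row_pair p c (\<lambda>_. 0) (\<lambda>_. 0)" by (intro row_pair_cong) auto
  thus "row_pair p c A B = gzero" by (simp add: row_pair_zero)
qed

lemma gadd_row_pair:
  "gadd (row_pair p c A B) (row_pair p c A' B') = row_pair p c (\<lambda>j. A j + A' j) (\<lambda>j. B j + B' j)"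
  unfolding row_pair_def gadd_def by (intro ext) auto

lemma etilde_gmult:
  assumes c: "1 \<le> c" "c < p" and r: "\<And>lam i j. r lam i j \<noteq> 0 \<Longrightarrow> 1 \<le> j \<and> j \<le> nlam lam"
  shows "gmult (etilde p c) r = row_pair p c (r (hook p c) (nc p c + 1)) (r (hook p (c + 1)) 1)"
proof (intro ext)
  fix lam i j
  note dims = hook_dims[OF c]
  have "hook p c \<noteq> hook p (c + 1)" using hook_eq_iff[of c "c + 1" p] c by simp
  thus "gmult (etilde p c) r lam i j = row_pair p c (r (hook p c) (nc p c + 1)) (r (hook p (c + 1)) 1) lam i j"
    unfolding etilde_def gmult_gadd_left unfolding gmult_eta_left gadd_def row_pair_def
    using dims r[of "hook p c" "nc p c + 1" j] r[of "hook p (c + 1)" 1 j] by auto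
qed

lemma row_pair_in_Lam:
  assumes c: "1 \<le> c" "c < p" and adm: "admissible_rows p c A B"
  shows "row_pair p c A B \<in> Lam p"
proof -
  note dims = hook_dims[OF c]
  let ?x = "row_pair p c A B"
  have "zp p (?x lam i j)" for lam i j
    using adm unfolding row_pair_def admissible_rows_def by auto
  moreover have "lam \<in> partitions p \<and> 1 \<le> i \<and> i \<le> nlam lam \<and> 1 \<le> j \<and> j \<le> nlam lam"
    if "?x lam i j \<noteq> 0" for lam i j
    using row_pair_nonzero[OF that] hook_in_partitions[of c p] hook_in_partitions[of "c + 1" p] c dims
    by auto
  ultimately have "inGamma p ?x" unfolding inGamma_def by blast
  moreover have "congp p (?x (hook p k) (nc p k + i) (nc p k + j)) (?x (hook p (k + 1)) i j)"
    if k: "k \<in> {1..p - 1}" and ij: "i \<in> {1..nb p k}" "j \<in> {1..nb p k}" for k i j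
  proof (cases "k = c \<and> i = 1")
    case True
    thus ?thesis using adm ij c dims by (simp add: row_pair_hook admissible_rows_def)
  next
    case False
    have "nc p (k + 1) = nb p k" using k nc_Suc by simp
    hence "?x (hook p k) (nc p k + i) (nc p k + j) = 0" "?x (hook p (k + 1)) i j = 0"
      using False k ij c dims by (auto simp: row_pair_hook)
    thus ?thesis by (simp add: congp_refl)
  qed
  moreover have "congp p (?x (hook p k) i j) 0"
    if k: "k \<in> {1..p}" and i: "i \<in> {1..nc p k}" and j: "j \<in> {nc p k + 1..nc p k + nb p k}" for k i j
  proof (cases "k = c + 1 \<and> i = 1")
    case True
    have j': "j - nb p c \<in> {1..nb p (c + 1)}" "nb p c + (j - nb p c) = j" using True j dims by auto
    have "\<forall>j \<in> {1..nb p (c + 1)}. congp p (B (nc p (c + 1) + j)) 0"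
      using adm unfolding admissible_rows_def by blast
    hence "congp p (B j) 0" using j' dims(3) by force
    moreover have "?x (hook p k) i j = B j" using True j c dims by (simp add: row_pair_hook)
    ultimately show ?thesis by simp
  next
    case False
    hence "?x (hook p k) i j = 0" using k i c by (auto simp: row_pair_hook)
    thus ?thesis by (simp add: congp_refl)
  qed
  ultimately show ?thesis unfolding Lam_def by blast
qed

lemma Lam_column_support: "r \<in> Lam p \<Longrightarrow> r lam i j \<noteq> 0 \<Longrightarrow> 1 \<le> j \<and> j \<le> nlam lam"
  unfolding Lam_def inGamma_def by blast

lemma Lam_zp: "r \<in> Lam p \<Longrightarrow> zp p (r lam i j)"
  unfolding Lam_def inGamma_def by blast

lemma Lam_congp_bb_cc:
  "r \<in> Lam p \<Longrightarrow> k \<in> {1..p - 1} \<Longrightarrow> i \<in> {1..nb p k} \<Longrightarrow> j \<in> {1..nb p k} \<Longrightarrow>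
   congp p (r (hook p k) (nc p k + i) (nc p k + j)) (r (hook p (k + 1)) i j)"
  unfolding Lam_def by blast

lemma Lam_congp_bc:
  "r \<in> Lam p \<Longrightarrow> k \<in> {1..p} \<Longrightarrow> i \<in> {1..nc p k} \<Longrightarrow> j \<in> {nc p k + 1..nc p k + nb p k} \<Longrightarrow>
   congp p (r (hook p k) i j) 0"
  unfolding Lam_def by blast

lemma etilde_gmult_row_pair:
  assumes "1 \<le> c" "c < p"
  shows "gmult (etilde p c) (row_pair p c A B) = row_pair p c A B"
proof -
  have "gmult (etilde p c) (row_pair p c A B) =
        row_pair p c (row_pair p c A B (hook p c) (nc p c + 1)) (row_pair p c A B (hook p (c + 1)) 1)"
    using assms by (intro etilde_gmult) (auto dest: row_pair_nonzero)
  also have "\<dots> = row_pair p c A B"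
    using assms by (intro row_pair_cong) (simp_all add: row_pair_hook)
  finally show ?thesis .
qed

lemma Ptilde_eq:
  assumes c: "1 \<le> c" "c < p"
  shows "Ptilde p c = {row_pair p c A B | A B. admissible_rows p c A B}"
proof (intro equalityI subsetI)
  fix x assume "x \<in> Ptilde p c"
  then obtain r where r: "r \<in> Lam p" and x: "x = gmult (etilde p c) r" unfolding Ptilde_def by blast
  note dims = hook_dims[OF c]
  have "admissible_rows p c (r (hook p c) (nc p c + 1)) (r (hook p (c + 1)) 1)"
    unfolding admissible_rows_def
  proof (intro conjI ballI)
    fix j assume "j \<in> {1..nb p c}"
    thus "congp p (r (hook p c) (nc p c + 1) (nc p c + j)) (r (hook p (c + 1)) 1 j)"
      using Lam_congp_bb_cc[OF r, of c 1 j] c dims by simp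
  next
    fix j assume "j \<in> {1..nb p (c + 1)}"
    thus "congp p (r (hook p (c + 1)) 1 (nc p (c + 1) + j)) 0"
      using Lam_congp_bc[OF r, of "c + 1" 1 "nc p (c + 1) + j"] c dims by simp
  qed (simp_all add: Lam_zp[OF r])
  moreover have "x = row_pair p c (r (hook p c) (nc p c + 1)) (r (hook p (c + 1)) 1)"
    unfolding x using c Lam_column_support[OF r] by (rule etilde_gmult)
  ultimately show "x \<in> {row_pair p c A B | A B. admissible_rows p c A B}" by blast
next
  fix x assume "x \<in> {row_pair p c A B | A B. admissible_rows p c A B}"
  then obtain A B where x: "x = row_pair p c A B" and adm: "admissible_rows p c A B" by blast
  have "x = gmult (etilde p c) (row_pair p c A B)" unfolding x etilde_gmult_row_pair[OF c] ..
  thus "x \<in> Ptilde p c" using row_pair_in_Lam[OF c adm] unfolding Ptilde_def by blast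
qed

lemma gmult_row_pair:
  assumes c: "1 \<le> c" "c < p" and r: "r \<in> Lam p"
  shows "gmult (row_pair p c A B) r =
    row_pair p c (\<lambda>j. \<Sum>m = 1..nlam (hook p c). A m * r (hook p c) m j)
                 (\<lambda>j. \<Sum>m = 1..nlam (hook p (c + 1)). B m * r (hook p (c + 1)) m j)"
proof (intro ext)
  fix lam i j
  have hne: "hook p c \<noteq> hook p (c + 1)" using hook_eq_iff[of c "c + 1" p] c by simp
  have out: "(\<Sum>m = 1..nlam mu. f m * r mu m j) = 0" if "\<not> (1 \<le> j \<and> j \<le> nlam mu)" for mu f
    using Lam_column_support[OF r, of mu _ j] that by (intro sum.neutral) auto
  consider "lam = hook p c" "i = nc p c + 1" | "lam = hook p (c + 1)" "i = 1"
    | "\<not> (lam = hook p c \<and> i = nc p c + 1)" "\<not> (lam = hook p (c + 1) \<and> i = 1)" by blast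
  thus "gmult (row_pair p c A B) r lam i j =
    row_pair p c (\<lambda>j. \<Sum>m = 1..nlam (hook p c). A m * r (hook p c) m j)
                 (\<lambda>j. \<Sum>m = 1..nlam (hook p (c + 1)). B m * r (hook p (c + 1)) m j) lam i j"
    by cases (use hne out in \<open>auto simp: gmult_def row_pair_def intro!: sum.cong sum.neutral\<close>)
qed

lemma sum_atLeastAtMost_one_add:
  "sum f {1..(a::nat) + b} = sum f {1..a} + (\<Sum>i = 1..b. f (a + i))"
proof (induction b)
  case (Suc b)
  thus ?case by (simp add: add.assoc)
qed simp

text \<open>Right multiplication preserves admissibility because the blocks of \<open>r\<close> linking the two
  rows (the \<open>bb\<close>-block of \<open>hook p c\<close> and the \<open>cc\<close>-block of \<open>hook p (c + 1)\<close>) are congruent,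
  and all other contributions are divisible by \<open>p\<close>.\<close>

lemma admissible_rows_gmult:
  assumes c: "1 \<le> c" "c < p" and r: "r \<in> Lam p" and adm: "admissible_rows p c A B"
  shows "admissible_rows p c (\<lambda>j. \<Sum>m = 1..nlam (hook p c). A m * r (hook p c) m j)
                             (\<lambda>j. \<Sum>m = 1..nlam (hook p (c + 1)). B m * r (hook p (c + 1)) m j)"
proof -
  note dims = hook_dims[OF c]
  define n1 n2 n3 where "n1 = nc p c" and "n2 = nb p c" and "n3 = nb p (c + 1)"
  let ?r1 = "r (hook p c)" and ?r2 = "r (hook p (c + 1))"
  have zA: "zp p (A m)" if "m \<in> {1..n1 + n2}" for m
    using adm that dims unfolding admissible_rows_def n1_def n2_def n3_def by auto
  have zB: "zp p (B m)" if "m \<in> {1..n2 + n3}" for m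
    using adm that dims unfolding admissible_rows_def n1_def n2_def n3_def by auto
  have AB: "congp p (A (n1 + i)) (B i)" if "i \<in> {1..n2}" for i
    using adm that unfolding admissible_rows_def n1_def n2_def n3_def by auto
  have B0: "congp p (B (n2 + i)) 0" if "i \<in> {1..n3}" for i
    using adm that dims unfolding admissible_rows_def n1_def n2_def n3_def by auto
  have r1_corner: "congp p (?r1 m (n1 + j)) 0" if "m \<in> {1..n1}" "j \<in> {1..n2}" for m j
    using Lam_congp_bc[OF r, of c m "n1 + j"] that c unfolding n1_def n2_def n3_def by auto
  have r2_corner: "congp p (?r2 m (n2 + j)) 0" if "m \<in> {1..n2}" "j \<in> {1..n3}" for m j
    using Lam_congp_bc[OF r, of "c + 1" m "n2 + j"] that c dims unfolding n1_def n2_def n3_def by auto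
  have r_diag: "congp p (?r1 (n1 + i) (n1 + j)) (?r2 i j)" if "i \<in> {1..n2}" "j \<in> {1..n2}" for i j
    using Lam_congp_bb_cc[OF r, of c i j] that c unfolding n1_def n2_def n3_def by auto
  have zr: "zp p (r lam i j)" for lam i j by (rule Lam_zp[OF r])
  have diag: "congp p (\<Sum>m = 1..n1 + n2. A m * ?r1 m (n1 + j)) (\<Sum>m = 1..n2 + n3. B m * ?r2 m j)"
    if j: "j \<in> {1..n2}" for j
  proof -
    have X1: "congp p (\<Sum>m = 1..n1. A m * ?r1 m (n1 + j)) 0"
      using j by (intro congp_sum_zero congp_mult_zero zA r1_corner) auto
    have X2: "congp p (\<Sum>i = 1..n2. A (n1 + i) * ?r1 (n1 + i) (n1 + j)) (\<Sum>i = 1..n2. B i * ?r2 i j)"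
      using j by (intro congp_sum congp_mult AB r_diag) auto
    have Y1: "zp p (\<Sum>i = 1..n2. B i * ?r2 i j)"
      by (intro zp_sum zp_mult zB zr) auto
    have Y2: "congp p (\<Sum>i = 1..n3. B (n2 + i) * ?r2 (n2 + i) j) 0"
      by (intro congp_sum_zero congp_zero_mult B0 zr) auto
    have "congp p (\<Sum>m = 1..n1 + n2. A m * ?r1 m (n1 + j)) (0 + (\<Sum>i = 1..n2. B i * ?r2 i j))"
      unfolding sum_atLeastAtMost_one_add by (rule congp_add[OF X1 X2])
    also have "\<dots> = (\<Sum>i = 1..n2. B i * ?r2 i j) + 0" by simp
    also have "congp p \<dots> ((\<Sum>i = 1..n2. B i * ?r2 i j) + (\<Sum>i = 1..n3. B (n2 + i) * ?r2 (n2 + i) j))"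
      by (rule congp_add[OF congp_refl[OF Y1] congp_sym[OF Y2]])
    finally show ?thesis unfolding sum_atLeastAtMost_one_add .
  qed
  have corner: "congp p (\<Sum>m = 1..n2 + n3. B m * ?r2 m (n2 + j)) 0" if j: "j \<in> {1..n3}" for j
  proof -
    have "congp p (\<Sum>m = 1..n2 + n3. B m * ?r2 m (n2 + j)) (0 + 0)"
      unfolding sum_atLeastAtMost_one_add using j
      by (intro congp_add congp_sum_zero congp_mult_zero congp_zero_mult zB zr B0 r2_corner) auto
    thus ?thesis by simp
  qed
  show ?thesis
    unfolding admissible_rows_def using diag corner dims
    by (auto simp: n1_def n2_def n3_def intro!: zp_sum zp_mult zr zA zB)
qed

lemma admissible_rows_add:
  "admissible_rows p c A B \<Longrightarrow> admissible_rows p c A' B' \<Longrightarrow>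
   admissible_rows p c (\<lambda>j. A j + A' j) (\<lambda>j. B j + B' j)"
  unfolding admissible_rows_def using congp_add[of p _ 0 _ 0] by (auto intro: zp_add congp_add)

lemma admissible_rows_uminus:
  "admissible_rows p c A B \<Longrightarrow> admissible_rows p c (\<lambda>j. - A j) (\<lambda>j. - B j)"
  unfolding admissible_rows_def using congp_uminus[of p _ 0] by (auto intro: zp_uminus congp_uminus)

lemma admissible_rows_zero: "admissible_rows p c (\<lambda>_. 0) (\<lambda>_. 0)"
  unfolding admissible_rows_def by (simp add: congp_refl)

lemma etilde_eq_row_pair:
  assumes "1 \<le> c" "c < p"
  shows "etilde p c = row_pair p c (\<lambda>j. if j = nc p c + 1 then 1 else 0) (\<lambda>j. if j = 1 then 1 else 0)"
    "admissible_rows p c (\<lambda>j. if j = nc p c + 1 then 1 else 0) (\<lambda>j. if j = 1 then 1 else 0)"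
proof -
  have "hook p c \<noteq> hook p (c + 1)" using hook_eq_iff[of c "c + 1" p] assms by simp
  thus "etilde p c = row_pair p c (\<lambda>j. if j = nc p c + 1 then 1 else 0) (\<lambda>j. if j = 1 then 1 else 0)"
    using hook_dims[OF assms] unfolding etilde_def row_pair_def eta_def gadd_def by (intro ext) auto
  show "admissible_rows p c (\<lambda>j. if j = nc p c + 1 then 1 else 0) (\<lambda>j. if j = 1 then 1 else 0)"
    using hook_dims[OF assms] unfolding admissible_rows_def by (auto simp: congp_refl)
qed

lemma PtildeE:
  assumes "x \<in> Ptilde p c" "1 \<le> c" "c < p"
  obtains A B where "x = row_pair p c A B" "admissible_rows p c A B"
  using assms Ptilde_eq by blast

lemma row_pair_in_Ptilde:
  "admissible_rows p c A B \<Longrightarrow> 1 \<le> c \<Longrightarrow> c < p \<Longrightarrow> row_pair p c A B \<in> Ptilde p c"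
  using Ptilde_eq by blast

lemma Ptilde_subset_Lam:
  assumes "1 \<le> c" "c < p"
  shows "Ptilde p c \<subseteq> Lam p"
  unfolding Ptilde_eq[OF assms] using row_pair_in_Lam[OF assms] by blast

lemma etilde_in_Ptilde: "1 \<le> c \<Longrightarrow> c < p \<Longrightarrow> etilde p c \<in> Ptilde p c"
  using etilde_eq_row_pair row_pair_in_Ptilde by metis

lemma etilde_gmult_Ptilde: "x \<in> Ptilde p c \<Longrightarrow> 1 \<le> c \<Longrightarrow> c < p \<Longrightarrow> gmult (etilde p c) x = x"
  by (auto elim: PtildeE simp: etilde_gmult_row_pair)

lemma Ptilde_gmult_closed:
  assumes "x \<in> Ptilde p c" "r \<in> Lam p" "1 \<le> c" "c < p"
  shows "gmult x r \<in> Ptilde p c"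
proof -
  obtain A B where "x = row_pair p c A B" "admissible_rows p c A B"
    using assms(1,3,4) by (rule PtildeE)
  thus ?thesis
    using admissible_rows_gmult[OF assms(3,4,2)] gmult_row_pair[OF assms(3,4,2)] row_pair_in_Ptilde assms
    by simp
qed

lemma Ptilde_gadd_closed:
  "x \<in> Ptilde p c \<Longrightarrow> y \<in> Ptilde p c \<Longrightarrow> 1 \<le> c \<Longrightarrow> c < p \<Longrightarrow> gadd x y \<in> Ptilde p c"
  by (auto elim!: PtildeE simp: gadd_row_pair intro!: row_pair_in_Ptilde admissible_rows_add)

lemma gzero_in_Ptilde: "1 \<le> c \<Longrightarrow> c < p \<Longrightarrow> gzero \<in> Ptilde p c"
  using row_pair_in_Ptilde[OF admissible_rows_zero] by (simp add: row_pair_zero)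

lemma Ptilde_gadd_inverse:
  assumes "x \<in> Ptilde p c" "1 \<le> c" "c < p"
  shows "\<exists>y \<in> Ptilde p c. gadd x y = gzero"
proof -
  obtain A B where x: "x = row_pair p c A B" and adm: "admissible_rows p c A B"
    using assms by (rule PtildeE)
  have "gadd x (row_pair p c (\<lambda>j. - A j) (\<lambda>j. - B j)) = gzero"
    unfolding x gadd_row_pair by (simp add: row_pair_zero)
  thus ?thesis using row_pair_in_Ptilde[OF admissible_rows_uminus[OF adm]] assms by blast
qed

lemma Ptilde_gmult_gone: "x \<in> Ptilde p c \<Longrightarrow> 1 \<le> c \<Longrightarrow> c < p \<Longrightarrow> gmult x (gone p) = x"
  using hook_in_partitions[of c p] hook_in_partitions[of "c + 1" p]
  by (auto elim!: PtildeE intro!: gmult_gone_right dest!: row_pair_nonzero)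

lemma is_rmod_Ptilde:
  assumes "1 \<le> c" "c < p"
  shows "is_rmod p (Ptilde p c) gadd gzero gmult"
  unfolding is_rmod_def
  using gzero_in_Ptilde Ptilde_gadd_closed gadd_assoc gadd_commute gadd_gzero_left
    Ptilde_gadd_inverse Ptilde_gmult_closed gmult_gadd_right gmult_gadd_left gmult_assoc
    Ptilde_gmult_gone assms
  by (simp del: Ptilde_def)

text \<open>The lift of \<open>f\<close> along \<open>g\<close> is the action of a preimage of \<open>f e\<close>.\<close>

lemma projective_rmod_if_left_identity:
  assumes P: "is_rmod p P gadd gzero gmult" "P \<subseteq> Lam p"
    and e: "e \<in> P" "\<And>x. x \<in> P \<Longrightarrow> gmult e x = x"
  shows "projective_rmod TYPE('m) p P gadd gzero gmult"
  unfolding projective_rmod_def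
proof (intro conjI allI impI)
  fix A :: "'m set" and addA zA actA and B :: "'m set" and addB zB actB g f
  assume A: "is_rmod p A addA zA actA" and g: "is_rhom p A addA actA B addB actB g" "g ` A = B"
    and f: "is_rhom p P gadd gmult B addB actB f"
  obtain a where a: "a \<in> A" "g a = f e"
    using f e(1) g(2) unfolding is_rhom_def by (metis imageE)
  from A have "actA x r \<in> A" "actA x (gadd r s) = addA (actA x r) (actA x s)"
      "actA x (gmult r s) = actA (actA x r) s"
    if "x \<in> A" "r \<in> Lam p" "s \<in> Lam p" for x r s
    using that unfolding is_rmod_def by blast+
  hence "is_rhom p P gadd gmult A addA actA (actA a)"
    using a(1) P(2) unfolding is_rhom_def by blast
  moreover have "g (actA a x) = f x" if x: "x \<in> P" for x
  proof -
    have "g (actA a x) = actB (f e) x" using g(1) a A x P(2) unfolding is_rhom_def by auto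
    also have "\<dots> = f (gmult e x)" using f e(1) x P(2) unfolding is_rhom_def by auto
    finally show ?thesis using e(2)[OF x] by simp
  qed
  ultimately show "\<exists>h. is_rhom p P gadd gmult A addA actA h \<and> (\<forall>x\<in>P. g (h x) = f x)" by blast
qed (rule P(1))

lemma projective_Ptilde:
  assumes "1 \<le> c" "c < p"
  shows "projective_rmod TYPE('m) p (Ptilde p c) gadd gzero gmult"
  using projective_rmod_if_left_identity[OF is_rmod_Ptilde[OF assms] Ptilde_subset_Lam[OF assms]
      etilde_in_Ptilde[OF assms]] etilde_gmult_Ptilde assms by blast

section \<open>The differentials and exactness\<close>

lemma hook_one_dims: "nlam (hook p 1) = 1" "nc p 1 = 0" "nb p 1 = 1" if "1 \<le> p"
  using nlam_hook_eq[of 1 p] that unfolding nc_def nb_def by simp_all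

lemma hook_last_dims: "nlam (hook p p) = 1" "nc p p = 1" "nb p p = 0" "nb p (p - 1) = 1" if "2 \<le> p"
proof -
  show "nc p p = 1" "nb p p = 0" using that unfolding nc_def nb_def by simp_all
  thus "nlam (hook p p) = 1" using nlam_hook_eq[of p p] that by simp
  have "p - 1 - 1 = p - 2" by simp
  thus "nb p (p - 1) = 1" unfolding nb_def by simp
qed

locale hook_complex =
  fixes p :: nat
  assumes three_le_p: "3 \<le> p"
begin

lemma ehat_up_row_pair:
  assumes "1 \<le> k" "k \<le> p - 2"
  shows "gmult (ehat p (k + 1) k) (row_pair p k A B) = row_pair p (k + 1) B (\<lambda>_. 0)"
proof -
  have e: "ehat p (k + 1) k = eta (hook p (k + 1)) (nc p (k + 1) + 1) 1"
    unfolding ehat_def using assms three_le_p by auto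
  have "k < p" "k + 1 < p" using assms three_le_p by auto
  note dims = hook_dims[OF assms(1) this(1)] hook_dims[OF _ this(2)]
  have "hook p k \<noteq> hook p (k + 1)" using hook_eq_iff[of k "k + 1" p] assms by simp
  thus ?thesis unfolding e gmult_eta_left row_pair_def using dims by (intro ext) auto
qed

lemma ehat_down_row_pair:
  assumes "1 \<le> k" "k \<le> p - 2"
  shows "gmult (ehat p k (k + 1)) (row_pair p (k + 1) A B) = row_pair p k (\<lambda>_. 0) (\<lambda>j. of_nat p * A j)"
proof -
  have e: "ehat p k (k + 1) = gsmul (of_nat p) (eta (hook p (k + 1)) 1 (nc p (k + 1) + 1))"
    unfolding ehat_def using assms three_le_p by auto
  have "k < p" "k + 1 < p" using assms three_le_p by auto
  note dims = hook_dims[OF assms(1) this(1)] hook_dims[OF _ this(2)]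
  have "hook p (k + 1) \<noteq> hook p (k + 2)" "hook p k \<noteq> hook p (k + 1)"
    using hook_eq_iff[of "k + 1" "k + 2" p] hook_eq_iff[of k "k + 1" p] assms by simp_all
  thus ?thesis
    unfolding e gmult_gsmul_left unfolding gmult_eta_left gsmul_def row_pair_def using dims by (intro ext) auto
qed

lemma ehat_first_row_pair:
  "gmult (ehat p 1 1) (row_pair p 1 A B) = row_pair p 1 (\<lambda>j. of_nat p * A j) (\<lambda>_. 0)"
proof -
  have e: "ehat p 1 1 = gsmul (of_nat p) (eta (hook p 1) 1 1)" unfolding ehat_def by simp
  have dims: "nlam (hook p 1) = 1" "nc p 1 = 0" using hook_one_dims three_le_p by simp_all
  have "hook p (Suc 0) \<noteq> hook p (Suc (Suc 0))" using hook_eq_iff[of 1 2 p] by (simp add: numeral_2_eq_2)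
  thus ?thesis
    unfolding e gmult_gsmul_left unfolding gmult_eta_left gsmul_def row_pair_def dims by (intro ext) auto
qed

lemma ehat_last_row_pair:
  "gmult (ehat p (p - 1) (p - 1)) (row_pair p (p - 1) A B) = row_pair p (p - 1) (\<lambda>_. 0) (\<lambda>j. of_nat p * B j)"
proof -
  have e: "ehat p (p - 1) (p - 1) = gsmul (of_nat p) (eta (hook p p) 1 1)"
    unfolding ehat_def using three_le_p by auto
  have pp: "p - 1 + 1 = p" using three_le_p by simp
  have dims: "nlam (hook p p) = 1" using hook_last_dims three_le_p by simp
  have "hook p (p - 1) \<noteq> hook p p" using hook_eq_iff[of "p - 1" p p] three_le_p by simp
  thus ?thesis
    unfolding e gmult_gsmul_left unfolding gmult_eta_left gsmul_def row_pair_def pp dims by (intro ext) auto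
qed

end

definition Ptilde_on :: "nat \<Rightarrow> nat \<Rightarrow> nat \<Rightarrow> gam set" where
  "Ptilde_on p c k = {x \<in> Ptilde p c. \<forall>lam i j. x lam i j \<noteq> 0 \<longrightarrow> lam = hook p k}"

lemma row_pair_in_Ptilde_on_iff:
  assumes c: "1 \<le> c" "c < p" and adm: "admissible_rows p c A B"
  shows "row_pair p c A B \<in> Ptilde_on p c c \<longleftrightarrow> (\<forall>j \<in> {1..nlam (hook p (c + 1))}. B j = 0)"
    and "row_pair p c A B \<in> Ptilde_on p c (c + 1) \<longleftrightarrow> (\<forall>j \<in> {1..nlam (hook p c)}. A j = 0)"
proof -
  have hne: "hook p (c + 1) \<noteq> hook p c" using hook_eq_iff[of "c + 1" c p] c by simp
  have P: "row_pair p c A B \<in> Ptilde p c" by (rule row_pair_in_Ptilde[OF adm c])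
  show "row_pair p c A B \<in> Ptilde_on p c c \<longleftrightarrow> (\<forall>j \<in> {1..nlam (hook p (c + 1))}. B j = 0)"
  proof
    assume "row_pair p c A B \<in> Ptilde_on p c c"
    hence supp: "row_pair p c A B lam i j \<noteq> 0 \<Longrightarrow> lam = hook p c" for lam i j
      unfolding Ptilde_on_def by blast
    show "\<forall>j \<in> {1..nlam (hook p (c + 1))}. B j = 0"
    proof
      fix j assume "j \<in> {1..nlam (hook p (c + 1))}"
      thus "B j = 0" using supp[of "hook p (c + 1)" 1 j] hne c by (auto simp: row_pair_hook)
    qed
  qed (use P in \<open>auto simp: Ptilde_on_def row_pair_def\<close>)
  show "row_pair p c A B \<in> Ptilde_on p c (c + 1) \<longleftrightarrow> (\<forall>j \<in> {1..nlam (hook p c)}. A j = 0)"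
  proof
    assume "row_pair p c A B \<in> Ptilde_on p c (c + 1)"
    hence supp: "row_pair p c A B lam i j \<noteq> 0 \<Longrightarrow> lam = hook p (c + 1)" for lam i j
      unfolding Ptilde_on_def by blast
    show "\<forall>j \<in> {1..nlam (hook p c)}. A j = 0"
    proof
      fix j assume "j \<in> {1..nlam (hook p c)}"
      thus "A j = 0" using supp[of "hook p c" "nc p c + 1" j] hne c by (auto simp: row_pair_hook)
    qed
  qed (use P in \<open>auto simp: Ptilde_on_def row_pair_def\<close>)
qed

lemma Ptilde_on_subset: "Ptilde_on p c k \<subseteq> Ptilde p c"
  unfolding Ptilde_on_def by blast

lemma congp_second_row_if_first_vanishes:
  assumes c: "1 \<le> c" "c < p" and adm: "admissible_rows p c A B"
    and A0: "\<forall>j \<in> {1..nlam (hook p c)}. A j = 0" and j: "j \<in> {1..nlam (hook p (c + 1))}"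
  shows "congp p (B j) 0"
proof (cases "j \<le> nb p c")
  case True
  hence "congp p (A (nc p c + j)) (B j)" "A (nc p c + j) = 0"
    using admissible_rowsD(3)[OF adm, of j] A0 j hook_dims[OF c] by auto
  thus ?thesis by (metis congp_sym)
next
  case False
  hence "j - nb p c \<in> {1..nb p (c + 1)}" "nc p (c + 1) + (j - nb p c) = j" using j hook_dims[OF c] by auto
  thus ?thesis using admissible_rowsD(4)[OF adm] by metis
qed

lemma congp_first_row_if_second_vanishes:
  assumes c: "1 \<le> c" "c < p" and adm: "admissible_rows p c A B"
    and B0: "\<forall>j \<in> {1..nlam (hook p (c + 1))}. B j = 0" and j: "j \<in> {1..nb p c}"
  shows "congp p (A (nc p c + j)) 0"
  using admissible_rowsD(3)[OF adm j] B0 j hook_dims[OF c] by auto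

lemma kernel_eq_PtildeI:
  assumes "1 \<le> c" "c < p" "S \<subseteq> Ptilde p c"
    and "\<And>A B. admissible_rows p c A B \<Longrightarrow> f (row_pair p c A B) = z \<longleftrightarrow> row_pair p c A B \<in> S"
  shows "{x \<in> Ptilde p c. f x = z} = S"
  using assms PtildeE[OF _ assms(1,2)] by blast

context hook_complex
begin

lemma kernel_ehat_up:
  assumes "1 \<le> k" "k \<le> p - 2"
  shows "{x \<in> Ptilde p k. gmult (ehat p (k + 1) k) x = gzero} = Ptilde_on p k k"
proof (rule kernel_eq_PtildeI[OF assms(1) _ Ptilde_on_subset])
  show "k < p" using assms three_le_p by simp
  fix A B assume "admissible_rows p k A B"
  thus "gmult (ehat p (k + 1) k) (row_pair p k A B) = gzero \<longleftrightarrow> row_pair p k A B \<in> Ptilde_on p k k"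
    unfolding ehat_up_row_pair[OF assms] using assms \<open>k < p\<close>
    by (simp add: row_pair_eq_gzero_iff row_pair_in_Ptilde_on_iff)
qed

lemma kernel_ehat_down:
  assumes "1 \<le> k" "k \<le> p - 2"
  shows "{x \<in> Ptilde p (k + 1). gmult (ehat p k (k + 1)) x = gzero} = Ptilde_on p (k + 1) (k + 2)"
proof (rule kernel_eq_PtildeI[OF _ _ Ptilde_on_subset])
  show "1 \<le> k + 1" "k + 1 < p" using assms three_le_p by simp_all
  fix A B assume "admissible_rows p (k + 1) A B"
  thus "gmult (ehat p k (k + 1)) (row_pair p (k + 1) A B) = gzero \<longleftrightarrow>
        row_pair p (k + 1) A B \<in> Ptilde_on p (k + 1) (k + 2)"
    unfolding ehat_down_row_pair[OF assms]
    using assms \<open>k + 1 < p\<close> three_le_p row_pair_in_Ptilde_on_iff(2)[of "k + 1" p A B]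
    by (simp add: row_pair_eq_gzero_iff)
qed

lemma kernel_ehat_first:
  "{x \<in> Ptilde p 1. gmult (ehat p 1 1) x = gzero} = Ptilde_on p 1 2"
proof (rule kernel_eq_PtildeI[OF _ _ Ptilde_on_subset])
  show "1 \<le> (1::nat)" "1 < p" using three_le_p by simp_all
  fix A B assume "admissible_rows p 1 A B"
  thus "gmult (ehat p 1 1) (row_pair p 1 A B) = gzero \<longleftrightarrow> row_pair p 1 A B \<in> Ptilde_on p 1 2"
    unfolding ehat_first_row_pair using three_le_p row_pair_in_Ptilde_on_iff(2)[of 1 p A B]
    by (simp add: row_pair_eq_gzero_iff numeral_2_eq_2)
qed

lemma kernel_ehat_last:
  "{x \<in> Ptilde p (p - 1). gmult (ehat p (p - 1) (p - 1)) x = gzero} = Ptilde_on p (p - 1) (p - 1)"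
proof (rule kernel_eq_PtildeI[OF _ _ Ptilde_on_subset])
  show "1 \<le> p - 1" "p - 1 < p" using three_le_p by simp_all
  fix A B assume "admissible_rows p (p - 1) A B"
  thus "gmult (ehat p (p - 1) (p - 1)) (row_pair p (p - 1) A B) = gzero \<longleftrightarrow>
        row_pair p (p - 1) A B \<in> Ptilde_on p (p - 1) (p - 1)"
    unfolding ehat_last_row_pair using three_le_p row_pair_in_Ptilde_on_iff(1)[of "p - 1" p A B]
    by (simp add: row_pair_eq_gzero_iff)
qed

lemma kernel_epshat: "{x \<in> Ptilde p 1. epshat p x = 0} = Ptilde_on p 1 2"
proof (rule kernel_eq_PtildeI[OF _ _ Ptilde_on_subset])
  show "1 \<le> (1::nat)" "1 < p" using three_le_p by simp_all
  fix A B assume "admissible_rows p 1 A B"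
  moreover have "epshat p (row_pair p 1 A B) = A 1"
    using hook_one_dims[of p] three_le_p unfolding epshat_def by (simp add: row_pair_hook)
  ultimately show "epshat p (row_pair p 1 A B) = 0 \<longleftrightarrow> row_pair p 1 A B \<in> Ptilde_on p 1 2"
    using three_le_p hook_one_dims[of p] row_pair_in_Ptilde_on_iff(2)[of 1 p A B]
    by (auto simp: numeral_2_eq_2)
qed

lemma image_ehat_up:
  assumes k: "1 \<le> k" "k \<le> p - 2"
  shows "gmult (ehat p (k + 1) k) ` Ptilde p k = Ptilde_on p (k + 1) (k + 1)"
proof (intro equalityI subsetI)
  have kp: "k < p" "1 \<le> k + 1" "k + 1 < p" using k three_le_p by auto
  note dims = hook_dims[OF k(1) kp(1)] hook_dims[OF kp(2,3)]
  {
    fix y assume "y \<in> gmult (ehat p (k + 1) k) ` Ptilde p k"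
    then obtain x where x: "x \<in> Ptilde p k" and y: "y = gmult (ehat p (k + 1) k) x" by blast
    obtain A B where xAB: "x = row_pair p k A B" and adm: "admissible_rows p k A B"
      using x k(1) kp(1) by (rule PtildeE)
    have "admissible_rows p (k + 1) B (\<lambda>_. 0)"
      using adm dims unfolding admissible_rows_def by (auto simp: congp_refl)
    thus "y \<in> Ptilde_on p (k + 1) (k + 1)"
      unfolding y xAB ehat_up_row_pair[OF k] using row_pair_in_Ptilde_on_iff(1)[OF kp(2,3)] by simp
  next
    fix y assume y: "y \<in> Ptilde_on p (k + 1) (k + 1)"
    obtain A B where yAB: "y = row_pair p (k + 1) A B" and adm: "admissible_rows p (k + 1) A B"
      using Ptilde_on_subset y kp(2,3) by (blast elim: PtildeE)
    have B0: "\<forall>j \<in> {1..nlam (hook p (k + 1 + 1))}. B j = 0"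
      using y row_pair_in_Ptilde_on_iff(1)[OF kp(2,3) adm] unfolding yAB by simp
    note zA = admissible_rowsD(1)[OF adm]
    define A1 where "A1 j = (if nc p k < j \<and> j \<le> nc p k + nb p k then A (j - nc p k) else 0)" for j
    have "admissible_rows p k A1 A"
      unfolding admissible_rows_def
    proof (intro conjI ballI)
      fix j assume "j \<in> {1..nlam (hook p k)}"
      thus "zp p (A1 j)" using dims unfolding A1_def by (auto intro!: zA)
    next
      fix j assume "j \<in> {1..nb p k}"
      thus "congp p (A1 (nc p k + j)) (A j)" using zA[of j] dims by (simp add: A1_def congp_refl)
    qed (use zA congp_first_row_if_second_vanishes[OF kp(2,3) adm B0] in auto)
    moreover have "gmult (ehat p (k + 1) k) (row_pair p k A1 A) = y"
      unfolding ehat_up_row_pair[OF k] yAB using B0 by (intro row_pair_cong) auto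
    ultimately show "y \<in> gmult (ehat p (k + 1) k) ` Ptilde p k"
      using row_pair_in_Ptilde k(1) kp(1) by blast
  }
qed

lemma image_ehat_down:
  assumes k: "1 \<le> k" "k \<le> p - 2"
  shows "gmult (ehat p k (k + 1)) ` Ptilde p (k + 1) = Ptilde_on p k (k + 1)"
proof (intro equalityI subsetI)
  have kp: "k < p" "1 \<le> k + 1" "k + 1 < p" using k three_le_p by auto
  note dims = hook_dims[OF k(1) kp(1)] hook_dims[OF kp(2,3)]
  have p0: "0 < p" using three_le_p by simp
  {
    fix y assume "y \<in> gmult (ehat p k (k + 1)) ` Ptilde p (k + 1)"
    then obtain x where x: "x \<in> Ptilde p (k + 1)" and y: "y = gmult (ehat p k (k + 1)) x" by blast
    obtain A B where xAB: "x = row_pair p (k + 1) A B" and adm: "admissible_rows p (k + 1) A B"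
      using x kp(2,3) by (rule PtildeE)
    note zA = admissible_rowsD(1)[OF adm]
    have "admissible_rows p k (\<lambda>_. 0) (\<lambda>j. of_nat p * A j)"
      unfolding admissible_rows_def
    proof (intro conjI ballI)
      fix j assume "j \<in> {1..nb p k}"
      thus "congp p 0 (of_nat p * A j)" using congp_sym[OF congp_times_p[OF p0 zA[of j]]] dims by simp
    next
      fix j assume "j \<in> {1..nb p (k + 1)}"
      thus "congp p (of_nat p * A (nc p (k + 1) + j)) 0"
        using congp_times_p[OF p0 zA[of "nc p (k + 1) + j"]] dims by simp
    qed (simp_all add: zp_mult zA)
    thus "y \<in> Ptilde_on p k (k + 1)"
      unfolding y xAB ehat_down_row_pair[OF k] using row_pair_in_Ptilde_on_iff(2)[OF k(1) kp(1)] by simp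
  next
    fix y assume y: "y \<in> Ptilde_on p k (k + 1)"
    obtain A B where yAB: "y = row_pair p k A B" and adm: "admissible_rows p k A B"
      using Ptilde_on_subset y k(1) kp(1) by (blast elim: PtildeE)
    have A0: "\<forall>j \<in> {1..nlam (hook p k)}. A j = 0"
      using y row_pair_in_Ptilde_on_iff(2)[OF k(1) kp(1) adm] unfolding yAB by simp
    define B1 where "B1 j = B j / of_nat p" for j
    define B2 where "B2 j = (if j \<le> nb p (k + 1) then B1 (nb p k + j) else 0)" for j
    have zB1: "zp p (B1 j)" if "j \<in> {1..nlam (hook p (k + 1))}" for j
      unfolding B1_def using congp_second_row_if_first_vanishes[OF k(1) kp(1) adm A0 that]
      by (rule congp_zero_divide_p)
    have "admissible_rows p (k + 1) B1 B2"
      unfolding admissible_rows_def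
    proof (intro conjI ballI)
      fix j assume "j \<in> {1..nlam (hook p (k + 1 + 1))}"
      thus "zp p (B2 j)" using dims unfolding B2_def by (auto intro!: zB1)
    next
      fix j assume "j \<in> {1..nb p (k + 1)}"
      thus "congp p (B1 (nc p (k + 1) + j)) (B2 j)"
        using dims zB1[of "nb p k + j"] by (simp add: B2_def congp_refl)
    qed (use zB1 dims in \<open>auto simp: B2_def congp_refl\<close>)
    moreover have "gmult (ehat p k (k + 1)) (row_pair p (k + 1) B1 B2) = y"
      unfolding ehat_down_row_pair[OF k] yAB using A0 p0 by (intro row_pair_cong) (auto simp: B1_def)
    ultimately show "y \<in> gmult (ehat p k (k + 1)) ` Ptilde p (k + 1)"
      using row_pair_in_Ptilde kp(2,3) by blast
  }
qed

lemma image_ehat_first: "gmult (ehat p 1 1) ` Ptilde p 1 = Ptilde_on p 1 1"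
proof (intro equalityI subsetI)
  have c: "1 \<le> (1::nat)" "1 < p" and p0: "0 < p" using three_le_p by simp_all
  have dims: "nlam (hook p 1) = 1" "nc p 1 = 0" "nb p 1 = 1" "nc p 2 = 1"
    using hook_one_dims[of p] three_le_p by (simp_all add: nc_def)
  {
    fix y assume "y \<in> gmult (ehat p 1 1) ` Ptilde p 1"
    then obtain x where x: "x \<in> Ptilde p 1" and y: "y = gmult (ehat p 1 1) x" by blast
    obtain A B where xAB: "x = row_pair p 1 A B" and adm: "admissible_rows p 1 A B"
      using x c by (rule PtildeE)
    have zA: "zp p (A 1)" using adm dims unfolding admissible_rows_def by simp
    have "admissible_rows p 1 (\<lambda>j. of_nat p * A j) (\<lambda>_. 0)"
      unfolding admissible_rows_def
      using zp_mult[OF zp_of_nat zA] congp_times_p[OF p0 zA] dims by (simp add: congp_refl)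
    thus "y \<in> Ptilde_on p 1 1"
      unfolding y xAB ehat_first_row_pair using row_pair_in_Ptilde_on_iff(1)[OF c] by simp
  next
    fix y assume y: "y \<in> Ptilde_on p 1 1"
    obtain A B where yAB: "y = row_pair p 1 A B" and adm: "admissible_rows p 1 A B"
      using Ptilde_on_subset y c by (blast elim: PtildeE)
    have B0: "\<forall>j \<in> {1..nlam (hook p (1 + 1))}. B j = 0"
      using y row_pair_in_Ptilde_on_iff(1)[OF c adm] unfolding yAB by simp
    have "congp p (A 1) 0" using congp_first_row_if_second_vanishes[OF c adm B0, of 1] dims by simp
    hence za: "zp p (A 1 / of_nat p)" by (rule congp_zero_divide_p)
    define A1 where "A1 j = (if j = 1 then A 1 / of_nat p else 0)" for j :: nat
    have "admissible_rows p 1 A1 A1"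
      using za dims unfolding admissible_rows_def A1_def by (auto simp: congp_refl numeral_2_eq_2)
    moreover have "gmult (ehat p 1 1) (row_pair p 1 A1 A1) = y"
      unfolding ehat_first_row_pair yAB using B0 dims p0
      by (intro row_pair_cong) (auto simp: A1_def numeral_2_eq_2)
    ultimately show "y \<in> gmult (ehat p 1 1) ` Ptilde p 1"
      using row_pair_in_Ptilde c by blast
  }
qed

lemma image_ehat_last: "gmult (ehat p (p - 1) (p - 1)) ` Ptilde p (p - 1) = Ptilde_on p (p - 1) p"
proof -
  define q where "q = p - 1"
  have c: "1 \<le> q" "q < p" and p0: "0 < p" and pq [simp]: "Suc q = p"
    using three_le_p unfolding q_def by simp_all
  have dims: "nlam (hook p p) = 1" "nb p p = 0" "nb p q = 1"
    using hook_last_dims[of p] three_le_p unfolding q_def by simp_all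
  have "gmult (ehat p q q) ` Ptilde p q = Ptilde_on p q p"
  proof (intro equalityI subsetI)
    fix y assume "y \<in> gmult (ehat p q q) ` Ptilde p q"
    then obtain x where x: "x \<in> Ptilde p q" and y: "y = gmult (ehat p q q) x" by blast
    obtain A B where xAB: "x = row_pair p q A B" and adm: "admissible_rows p q A B"
      using x c by (rule PtildeE)
    have zB: "zp p (B 1)" using adm dims unfolding admissible_rows_def by simp
    have "admissible_rows p q (\<lambda>_. 0) (\<lambda>j. of_nat p * B j)"
      unfolding admissible_rows_def
      using zp_mult[OF zp_of_nat zB] congp_sym[OF congp_times_p[OF p0 zB]] dims by simp
    thus "y \<in> Ptilde_on p q p"
      unfolding y xAB ehat_last_row_pair[folded q_def] using row_pair_in_Ptilde_on_iff(2)[OF c] by simp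
  next
    fix y assume y: "y \<in> Ptilde_on p q p"
    obtain A B where yAB: "y = row_pair p q A B" and adm: "admissible_rows p q A B"
      using Ptilde_on_subset y c by (blast elim: PtildeE)
    have A0: "\<forall>j \<in> {1..nlam (hook p q)}. A j = 0"
      using y row_pair_in_Ptilde_on_iff(2)[OF c adm] unfolding yAB by simp
    have "congp p (B 1) 0" using congp_second_row_if_first_vanishes[OF c adm A0, of 1] dims by simp
    hence zb: "zp p (B 1 / of_nat p)" by (rule congp_zero_divide_p)
    define A1 where "A1 j = (if j = nc p q + 1 then B 1 / of_nat p else 0)" for j
    define B1 where "B1 j = (if j = 1 then B 1 / of_nat p else 0)" for j :: nat
    have "admissible_rows p q A1 B1"
      unfolding admissible_rows_def using zb dims by (simp add: A1_def B1_def congp_refl)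
    moreover have "gmult (ehat p q q) (row_pair p q A1 B1) = y"
      unfolding ehat_last_row_pair[folded q_def] yAB using A0 dims p0
      by (intro row_pair_cong) (auto simp: B1_def)
    ultimately show "y \<in> gmult (ehat p q q) ` Ptilde p q"
      using row_pair_in_Ptilde c by blast
  qed
  thus ?thesis unfolding q_def .
qed

end

definition rising_half :: "nat \<Rightarrow> nat \<Rightarrow> bool" where
  "rising_half p i \<longleftrightarrow> i mod (2 * (p - 1)) \<le> p - 2"

context hook_complex
begin

lemma omega_Suc_cases:
  obtains (turn_low) "omega p i = 1" "omega p (Suc i) = 1" "\<not> rising_half p i" "rising_half p (Suc i)"
  | (rise) k where "1 \<le> k" "k \<le> p - 2" "omega p i = k" "omega p (Suc i) = k + 1"
      "rising_half p i" "rising_half p (Suc i)"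
  | (turn_high) "omega p i = p - 1" "omega p (Suc i) = p - 1" "rising_half p i" "\<not> rising_half p (Suc i)"
  | (fall) k where "1 \<le> k" "k \<le> p - 2" "omega p i = k + 1" "omega p (Suc i) = k"
      "\<not> rising_half p i" "\<not> rising_half p (Suc i)"
proof -
  define l r where "l = 2 * (p - 1)" and "r = i mod l"
  have l: "l = 2 * p - 2" and r: "r < l" using three_le_p unfolding l_def r_def by auto
  have om: "omega p j = (if j mod l \<le> p - 2 then j mod l + 1 else l - j mod l)" for j
    unfolding omega_def l_def Let_def by simp
  have rh: "rising_half p j \<longleftrightarrow> j mod l \<le> p - 2" for j
    unfolding rising_half_def l_def ..
  have suc: "Suc i mod l = (if Suc r = l then 0 else Suc r)"
    unfolding r_def by (simp add: mod_Suc)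
  have om_i: "omega p i = (if r \<le> p - 2 then r + 1 else l - r)" and rh_i: "rising_half p i \<longleftrightarrow> r \<le> p - 2"
    unfolding om rh r_def by simp_all
  have om_Si: "omega p (Suc i) = (if Suc r = l then 1 else if Suc r \<le> p - 2 then r + 2 else l - Suc r)"
    and rh_Si: "rising_half p (Suc i) \<longleftrightarrow> Suc r = l \<or> Suc r \<le> p - 2"
    unfolding om rh suc using three_le_p by auto
  note facts = om_i rh_i om_Si rh_Si l three_le_p
  consider "Suc r = l" | "r + 3 \<le> p" | "r + 2 = p" | "p \<le> r + 1" "Suc r < l"
    using r three_le_p l by linarith
  thus thesis
  proof cases
    case 1
    thus thesis using facts by (intro turn_low) auto
  next
    case 2
    thus thesis using facts by (intro rise[of "r + 1"]) auto
  next
    case 3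
    thus thesis using facts by (intro turn_high) auto
  next
    case 4
    thus thesis using facts by (intro fall[of "l - r - 1"]) auto
  qed
qed

end

lemma omega_0: "omega p 0 = 1"
  unfolding omega_def by simp

text \<open>Both the kernel of \<open>dhat p i\<close> and the image of \<open>dhat p (i + 1)\<close>: the part of
  \<open>Ptilde p (omega p i)\<close> concentrated on a single hook component, namely the next one while \<open>omega\<close>
  is increasing and its own one while \<open>omega\<close> is decreasing.\<close>

definition syzygy :: "nat \<Rightarrow> nat \<Rightarrow> gam set" where
  "syzygy p i = Ptilde_on p (omega p i) (if rising_half p i then omega p i + 1 else omega p i)"

lemma syzygy_subset: "syzygy p i \<subseteq> Ptilde p (omega p i)"
  unfolding syzygy_def by (rule Ptilde_on_subset)

context hook_complex
begin

lemma dhat_Suc: "dhat p (Suc i) = ehat p (omega p i) (omega p (Suc i))"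
  unfolding dhat_def by simp

lemma kernel_dhat:
  "{x \<in> Ptilde p (omega p (Suc i)). gmult (dhat p (Suc i)) x = gzero} = syzygy p (Suc i)"
proof (cases rule: omega_Suc_cases[of i])
  case turn_low
  thus ?thesis unfolding dhat_Suc syzygy_def using kernel_ehat_first by (simp add: numeral_2_eq_2)
next
  case (rise k)
  thus ?thesis unfolding dhat_Suc syzygy_def using kernel_ehat_down[OF rise(1,2)] by (simp add: numeral_2_eq_2)
next
  case turn_high
  thus ?thesis unfolding dhat_Suc syzygy_def using kernel_ehat_last by simp
next
  case (fall k)
  thus ?thesis unfolding dhat_Suc syzygy_def using kernel_ehat_up[OF fall(1,2)] by simp
qed

lemma image_dhat: "gmult (dhat p (Suc i)) ` Ptilde p (omega p (Suc i)) = syzygy p i"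
proof (cases rule: omega_Suc_cases[of i])
  case turn_low
  thus ?thesis unfolding dhat_Suc syzygy_def using image_ehat_first by simp
next
  case (rise k)
  thus ?thesis unfolding dhat_Suc syzygy_def using image_ehat_down[OF rise(1,2)] by simp
next
  case turn_high
  thus ?thesis unfolding dhat_Suc syzygy_def using image_ehat_last three_le_p by simp
next
  case (fall k)
  thus ?thesis unfolding dhat_Suc syzygy_def using image_ehat_up[OF fall(1,2)] by simp
qed

lemma kernel_epshat_syzygy: "{x \<in> Ptilde p (omega p 0). epshat p x = 0} = syzygy p 0"
  unfolding syzygy_def omega_0 rising_half_def using kernel_epshat by (simp add: numeral_2_eq_2)

end

lemma gmult_hook_one: "1 \<le> p \<Longrightarrow> gmult r s (hook p 1) 1 1 = r (hook p 1) 1 1 * s (hook p 1) 1 1"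
  unfolding gmult_def using hook_one_dims by simp

lemma is_rmod_Zp:
  assumes "1 \<le> p"
  shows "is_rmod p (Zp p) (+) 0 (trivact p)"
proof -
  have "gone p (hook p 1) 1 1 = 1"
    using hook_one_dims[OF assms] hook_in_partitions[of 1 p] assms unfolding gone_def by simp
  moreover have "\<exists>y \<in> Zp p. x + y = 0" if "x \<in> Zp p" for x
    using that zp_uminus unfolding Zp_def by (intro bexI[of _ "- x"]) auto
  ultimately show ?thesis
    unfolding is_rmod_def trivact_def gmult_hook_one[OF assms]
    by (auto simp: Zp_def gadd_def algebra_simps intro: zp_add zp_mult Lam_zp)
qed

lemma is_rhom_gmult_left:
  "(\<And>x. x \<in> M \<Longrightarrow> gmult d x \<in> N) \<Longrightarrow> is_rhom p M gadd gmult N gadd gmult (gmult d)"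
  unfolding is_rhom_def by (simp add: gmult_gadd_right gmult_assoc)

context hook_complex
begin

lemma is_rhom_epshat: "is_rhom p (Ptilde p 1) gadd gmult (Zp p) (+) (trivact p) (epshat p)"
proof -
  have "1 \<le> p" "Ptilde p 1 \<subseteq> Lam p" using three_le_p Ptilde_subset_Lam[of 1 p] by simp_all
  thus ?thesis
    unfolding is_rhom_def epshat_def trivact_def gmult_hook_one[OF \<open>1 \<le> p\<close>]
    by (auto simp: Zp_def gadd_def intro: Lam_zp)
qed

lemma epshat_surj: "epshat p ` Ptilde p 1 = Zp p"
proof (intro equalityI subsetI)
  fix q assume "q \<in> epshat p ` Ptilde p 1"
  thus "q \<in> Zp p" using is_rhom_epshat unfolding is_rhom_def by blast
next
  fix q assume q: "q \<in> Zp p"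
  define B where "B j = (if j = 1 then q else 0)" for j :: nat
  have c: "1 \<le> (1::nat)" "1 < p" using three_le_p by simp_all
  have "nc p 2 = 1" unfolding nc_def by simp
  hence "admissible_rows p 1 (\<lambda>_. q) B"
    using q hook_one_dims[of p] c unfolding admissible_rows_def Zp_def B_def
    by (auto simp: congp_refl numeral_2_eq_2)
  moreover have "epshat p (row_pair p 1 (\<lambda>_. q) B) = q"
    using hook_one_dims[of p] c unfolding epshat_def by (simp add: row_pair_hook)
  ultimately show "q \<in> epshat p ` Ptilde p 1" using row_pair_in_Ptilde[OF _ c] by force
qed

end

theorem mainTheorem2:
  fixes p :: nat
  assumes "prime p" and "3 \<le> p"
  shows
    "(\<forall>k \<in> {1..p-1}. projective_rmod TYPE('m) p (Ptilde p k) gadd gzero gmult)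
     \<and> is_rmod p (Zp p) (+) 0 (trivact p)
     \<and> (\<forall>i \<ge> 1. is_rhom p (Ptilde p (omega p i)) gadd gmult
                        (Ptilde p (omega p (i - 1))) gadd gmult (gmult (dhat p i)))
     \<and> is_rhom p (Ptilde p (omega p 0)) gadd gmult (Zp p) (+) (trivact p) (epshat p)
     \<and> epshat p ` Ptilde p (omega p 0) = Zp p
     \<and> {x \<in> Ptilde p (omega p 0). epshat p x = 0} = gmult (dhat p 1) ` Ptilde p (omega p 1)
     \<and> (\<forall>i \<ge> 1. {x \<in> Ptilde p (omega p i). gmult (dhat p i) x = gzero}
                 = gmult (dhat p (i + 1)) ` Ptilde p (omega p (i + 1)))"
proof -
  interpret hook_complex p using assms(2) by unfold_locales
  have hom: "is_rhom p (Ptilde p (omega p (Suc i))) gadd gmult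
               (Ptilde p (omega p i)) gadd gmult (gmult (dhat p (Suc i)))" for i
    using image_dhat[of i] syzygy_subset[of p i] by (intro is_rhom_gmult_left) auto
  have exact: "{x \<in> Ptilde p (omega p (Suc i)). gmult (dhat p (Suc i)) x = gzero}
                 = gmult (dhat p (Suc (Suc i))) ` Ptilde p (omega p (Suc (Suc i)))" for i
    using kernel_dhat[of i] image_dhat[of "Suc i"] by simp
  have from_Suc: "\<forall>i \<ge> 1. P i" if P: "\<And>i. P (Suc i)" for P :: "nat \<Rightarrow> bool"
  proof (intro allI impI)
    fix i :: nat assume "1 \<le> i"
    then obtain j where "i = Suc j" by (cases i) auto
    thus "P i" using P by simp
  qed
  have "1 \<le> p" using assms(2) by simp
  show ?thesis
  proof (intro conjI ballI from_Suc)
    fix k assume "k \<in> {1..p - 1}"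
    thus "projective_rmod TYPE('m) p (Ptilde p k) gadd gzero gmult" by (intro projective_Ptilde) auto
  next
    show "{x \<in> Ptilde p (omega p 0). epshat p x = 0} = gmult (dhat p 1) ` Ptilde p (omega p 1)"
      using kernel_epshat_syzygy image_dhat[of 0] by simp
  qed (use is_rmod_Zp[OF \<open>1 \<le> p\<close>] hom exact is_rhom_epshat epshat_surj in \<open>simp_all add: omega_0\<close>)
qed

end
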